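(* Let $G$ be a finite innately transitive permutation group on a set $\Omega$ with a non-abelian plinth $M$, and let $\omega\in\Omega$. Suppose there is a $G$-invariant direct decomposition $\mathcal X=\{M_1,\dots,M_r\}$ of $M$ such that $M_\omega$ is an $\mathcal X$-subgroup. Let $\Xi$ be the right coset space of $M_1\cap M_\omega$ in $M_1$. Then there is a monomorphism $\alpha:G\to\mathrm{Sym}\,\Xi\wr S_r$, where the wreath product acts in product action on $\Xi^r$, such that the inclusion $G\alpha\le\mathrm{Sym}\,\Xi\wr S_r$ is a normal inclusion.
   Context: Innately transitive: having a transitive minimal normal subgroup, called a plinth. A set $\mathcal X=\{X_1,\dots,X_r\}$ of subgroups of a group $X$ is a direct decomposition if $X=X_1\times\cdots\times X_r$; it is $G$-invariant if $G$ permutes its members by conjugation. A subgroup $Y\le X$ is an $\mathcal X$-subgroup if $\{Y\cap X_i\}$ is a direct decomposition of $Y$, i.e. $Y=\prod_i(Y\cap X_i)$. Product action of $\mathrm{Sym}\,\Xi\wr S_r$ on $\Xi^r$: $(\xi_1,\dots,\xi_r)^{(g_1,\dots,g_r)h}=(\xi_{1h^{-1}}g_{1h^{-1}},\dots,\xi_{rh^{-1}}g_{rh^{-1}})$. For a subgroup $H$ of such a wreath product $U=\mathrm{Sym}\,\Xi\wr S_r$ with a non-abelian minimal normal subgroup $N$ transitive on $\Xi^r$: let $U_j$ be the stabiliser of $j$ under the projection $U\to S_r$, $U_j=\mathrm{Sym}\,\Xi\times(\mathrm{Sym}\,\Xi\wr S_{r-1})$; the $j$-th component $N^{(j)}$ is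 the projection of $N\cap U_j$ to the first factor, identified with the product of those simple direct factors of $N$ not in the kernel of $N\to N^{(j)}$. The inclusion $H\le U$ is normal if each simple direct factor of $N$ lies in exactly one component $N^{(j)}$, equivalently $N=\prod_j N^{(j)}$. *)

theory Defs
  imports "HOL-Algebra.Algebra"
begin

abbreviation sub_str :: "('g, 'm) monoid_scheme \<Rightarrow> 'g set \<Rightarrow> ('g, 'm) monoid_scheme" where
  "sub_str Gr K \<equiv> Gr\<lparr>carrier := K\<rparr>"

definition nonabelian_set :: "('g, 'm) monoid_scheme \<Rightarrow> 'g set \<Rightarrow> bool" where
  "nonabelian_set Gr K \<longleftrightarrow> (\<exists>x\<in>K. \<exists>y\<in>K. x \<otimes>\<^bsub>Gr\<^esub> y \<noteq> y \<otimes>\<^bsub>Gr\<^esub> x)"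

definition minimal_normal :: "('g, 'm) monoid_scheme \<Rightarrow> 'g set \<Rightarrow> bool" where
  "minimal_normal Gr K \<longleftrightarrow> K \<lhd> Gr \<and> K \<noteq> {\<one>\<^bsub>Gr\<^esub>} \<and>
     (\<forall>L. L \<lhd> Gr \<longrightarrow> L \<subseteq> K \<longrightarrow> L = {\<one>\<^bsub>Gr\<^esub>} \<or> L = K)"

definition direct_decomp :: "('g, 'm) monoid_scheme \<Rightarrow> 'g set \<Rightarrow> nat \<Rightarrow> (nat \<Rightarrow> 'g set) \<Rightarrow> bool" where
  "direct_decomp Gr K r Xs \<longleftrightarrow>
     subgroup K Gr \<and>
     (\<forall>i<r. Xs i \<lhd> sub_str Gr K) \<and>
     K = generate Gr (\<Union>i<r. Xs i) \<and>
     (\<forall>i<r. Xs i \<inter> generate Gr (\<Union>j\<in>{0..<r} - {i}. Xs j) = {\<one>\<^bsub>Gr\<^esub>})"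

definition X_subgroup :: "('g, 'm) monoid_scheme \<Rightarrow> nat \<Rightarrow> (nat \<Rightarrow> 'g set) \<Rightarrow> 'g set \<Rightarrow> bool" where
  "X_subgroup Gr r Xs Y \<longleftrightarrow> direct_decomp Gr Y r (\<lambda>i. Y \<inter> Xs i)"

definition invariant_decomp :: "('g, 'm) monoid_scheme \<Rightarrow> 'g set \<Rightarrow> nat \<Rightarrow> (nat \<Rightarrow> 'g set) \<Rightarrow> bool" where
  "invariant_decomp Gr G r Xs \<longleftrightarrow>
     (\<forall>g\<in>G. \<forall>i<r. \<exists>j<r. (\<lambda>x. inv\<^bsub>Gr\<^esub> g \<otimes>\<^bsub>Gr\<^esub> x \<otimes>\<^bsub>Gr\<^esub> g) ` Xs i = Xs j)"

definition simple_direct_factor :: "('g, 'm) monoid_scheme \<Rightarrow> 'g set \<Rightarrow> 'g set \<Rightarrow> bool" where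
  "simple_direct_factor Gr N T \<longleftrightarrow>
     T \<lhd> sub_str Gr N \<and> simple_group (sub_str Gr T) \<and>
     (\<exists>C. C \<lhd> sub_str Gr N \<and> T \<inter> C = {\<one>\<^bsub>Gr\<^esub>} \<and> T <#>\<^bsub>Gr\<^esub> C = N)"

text \<open>Permutations of \<Omega> are the elements of BijGroup \<Omega> (extensional bijections);
  a permutation group on \<Omega> is a subgroup of BijGroup \<Omega>; the point x is moved to g x.\<close>

definition transitive_on :: "'a set \<Rightarrow> ('a \<Rightarrow> 'a) set \<Rightarrow> bool" where
  "transitive_on \<Omega> H \<longleftrightarrow> (\<forall>x\<in>\<Omega>. \<forall>y\<in>\<Omega>. \<exists>h\<in>H. h x = y)"

definition stabiliser :: "('a \<Rightarrow> 'a) set \<Rightarrow> 'a \<Rightarrow> ('a \<Rightarrow> 'a) set" where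
  "stabiliser H \<omega> = {h \<in> H. h \<omega> = \<omega>}"

definition innately_transitive_plinth :: "'a set \<Rightarrow> ('a \<Rightarrow> 'a) set \<Rightarrow> ('a \<Rightarrow> 'a) set \<Rightarrow> bool" where
  "innately_transitive_plinth \<Omega> G M \<longleftrightarrow>
     subgroup G (BijGroup \<Omega>) \<and> minimal_normal (sub_str (BijGroup \<Omega>) G) M \<and> transitive_on \<Omega> M"

text \<open>Elements are pairs (g, h) with g = (g_0,...,g_{r-1}) a tuple of permutations of \<Xi>
  (indices 0..<r) and h a permutation of {0..<r}.  The action on \<Xi>^r is the product action
  (x_i)_i \<mapsto> (g_{h^-1 i} (x_{h^-1 i}))_i; the multiplication is the one making this a
  (left, i.e. function-composition) action, matching the convention of BijGroup.\<close>

type_synonym 'b wr_elt = "(nat \<Rightarrow> 'b \<Rightarrow> 'b) \<times> (nat \<Rightarrow> nat)"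

definition wreath :: "'b set \<Rightarrow> nat \<Rightarrow> 'b wr_elt monoid" where
  "wreath \<Xi> r =
    \<lparr>carrier = {(g, h). g \<in> {0..<r} \<rightarrow>\<^sub>E Bij \<Xi> \<and> h \<in> Bij {0..<r}},
     monoid.mult = (\<lambda>(g, h) (g', h'). ((\<lambda>k\<in>{0..<r}. compose \<Xi> (g (h' k)) (g' k)), compose {0..<r} h h')),
     one = ((\<lambda>k\<in>{0..<r}. (\<lambda>x\<in>\<Xi>. x)), (\<lambda>k\<in>{0..<r}. k))\<rparr>"

definition prod_points :: "'b set \<Rightarrow> nat \<Rightarrow> (nat \<Rightarrow> 'b) set" where
  "prod_points \<Xi> r = {0..<r} \<rightarrow>\<^sub>E \<Xi>"

definition prod_act :: "'b set \<Rightarrow> nat \<Rightarrow> 'b wr_elt \<Rightarrow> (nat \<Rightarrow> 'b) \<Rightarrow> (nat \<Rightarrow> 'b)" where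
  "prod_act \<Xi> r u x = (\<lambda>i\<in>{0..<r}. fst u (inv_into {0..<r} (snd u) i) (x (inv_into {0..<r} (snd u) i)))"

definition U_stab :: "'b set \<Rightarrow> nat \<Rightarrow> nat \<Rightarrow> 'b wr_elt set" where
  "U_stab \<Xi> r j = {u \<in> carrier (wreath \<Xi> r). snd u j = j}"

definition proj_comp :: "nat \<Rightarrow> 'b wr_elt \<Rightarrow> ('b \<Rightarrow> 'b)" where
  "proj_comp j u = fst u j"

text \<open>A simple direct factor T of N lies in the j-th component N^(j) iff T \<le> N \<inter> U_j and
  T is not in the kernel of the projection N \<inter> U_j \<rightarrow> N^(j).\<close>
definition in_component :: "'b set \<Rightarrow> nat \<Rightarrow> 'b wr_elt set \<Rightarrow> nat \<Rightarrow> 'b wr_elt set \<Rightarrow> bool" where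
  "in_component \<Xi> r N j T \<longleftrightarrow>
     T \<subseteq> N \<inter> U_stab \<Xi> r j \<and> (\<exists>t\<in>T. proj_comp j t \<noteq> (\<lambda>x\<in>\<Xi>. x))"

definition normal_inclusion :: "'b set \<Rightarrow> nat \<Rightarrow> 'b wr_elt set \<Rightarrow> 'b wr_elt set \<Rightarrow> bool" where
  "normal_inclusion \<Xi> r H N \<longleftrightarrow>
     subgroup H (wreath \<Xi> r) \<and>
     minimal_normal (sub_str (wreath \<Xi> r) H) N \<and>
     nonabelian_set (wreath \<Xi> r) N \<and>
     (\<forall>x\<in>prod_points \<Xi> r. \<forall>y\<in>prod_points \<Xi> r. \<exists>n\<in>N. prod_act \<Xi> r n x = y) \<and>
     (\<forall>T. simple_direct_factor (wreath \<Xi> r) N T \<longrightarrow>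
        (\<exists>!j. j < r \<and> in_component \<Xi> r N j T))"

end

theory Submission
  imports Defs
begin

text \<open>Because \<open>M\<^sub>\<omega>\<close> is an \<open>\<X>\<close>-subgroup and \<open>M\<close> is transitive,
  \<open>\<Omega> \<cong> M/M\<^sub>\<omega> \<cong> \<Prod>\<^sub>i M\<^sub>i/(M\<^sub>i \<inter> M\<^sub>\<omega>)\<close>. By minimality of \<open>M\<close>, \<open>G\<close> permutes the factors
  transitively, so conjugating with a transversal identifies every \<open>M\<^sub>i/(M\<^sub>i \<inter> M\<^sub>\<omega>)\<close> with \<open>\<Xi>\<close>.
  This gives coordinates \<open>\<Omega> \<rightarrow> \<Xi>\<^sup>r\<close>; an element \<open>g\<close> permutes them as it permutes the factors, acting on
  each by a permutation of \<open>\<Xi>\<close>, and recording these data is the embedding \<open>\<alpha>\<close>. Minimality,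
  non-commutativity and transitivity of \<open>M\<close> transfer to \<open>\<alpha> M\<close>. Finally \<open>M\<close> has trivial centre, so a
  simple direct factor of \<open>\<alpha> M\<close> lies in a single \<open>\<alpha> M\<^sub>i\<close>, which moves only the \<open>i\<close>-th coordinate.\<close>

section \<open>Wreath products and permutation groups\<close>

lemma wreath_carrier_iff:
  "(g, h) \<in> carrier (wreath Y r) \<longleftrightarrow> g \<in> {0..<r} \<rightarrow>\<^sub>E Bij Y \<and> h \<in> Bij {0..<r}"
  by (simp add: wreath_def)

lemma wreath_mult_eq:
  "(g, h) \<otimes>\<^bsub>wreath Y r\<^esub> (g', h') =
     ((\<lambda>k\<in>{0..<r}. compose Y (g (h' k)) (g' k)), compose {0..<r} h h')"
  by (simp add: wreath_def)

lemma wreath_one_eq: "\<one>\<^bsub>wreath Y r\<^esub> = ((\<lambda>k\<in>{0..<r}. (\<lambda>x\<in>Y. x)), (\<lambda>k\<in>{0..<r}. k))"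
  by (simp add: wreath_def)

lemma Bij_apply_mem: "f \<in> Bij S \<Longrightarrow> x \<in> S \<Longrightarrow> f x \<in> S"
  using Bij_imp_funcset by blast

lemma wreath_mult_closed:
  assumes "x \<in> carrier (wreath Y r)" "y \<in> carrier (wreath Y r)"
  shows "x \<otimes>\<^bsub>wreath Y r\<^esub> y \<in> carrier (wreath Y r)"
proof -
  obtain g h g' h' where xy: "x = (g, h)" "y = (g', h')" by fastforce
  show ?thesis
    using assms unfolding xy wreath_mult_eq wreath_carrier_iff
    by (auto intro!: compose_Bij simp: PiE_iff Bij_apply_mem Bij_apply_mem[of h' "{0..<r}", simplified])
qed

lemma wreath_one_closed: "\<one>\<^bsub>wreath Y r\<^esub> \<in> carrier (wreath Y r)"
  unfolding wreath_one_eq wreath_carrier_iff by (auto simp: id_Bij)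

lemma wreath_mult_assoc:
  assumes "z \<in> carrier (wreath Y r)"
  shows "x \<otimes>\<^bsub>wreath Y r\<^esub> y \<otimes>\<^bsub>wreath Y r\<^esub> z = x \<otimes>\<^bsub>wreath Y r\<^esub> (y \<otimes>\<^bsub>wreath Y r\<^esub> z)"
proof -
  obtain g h g' h' g'' h'' where xyz: "x = (g, h)" "y = (g', h')" "z = (g'', h'')" by fastforce
  have h'': "h'' \<in> Bij {0..<r}" using assms unfolding xyz wreath_carrier_iff by auto
  have "(\<lambda>k\<in>{0..<r}. compose Y ((\<lambda>k\<in>{0..<r}. compose Y (g (h' k)) (g' k)) (h'' k)) (g'' k))
      = (\<lambda>k\<in>{0..<r}. compose Y (g (compose {0..<r} h' h'' k))
                                  ((\<lambda>k\<in>{0..<r}. compose Y (g' (h'' k)) (g'' k)) k))"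
  proof (rule restrict_ext)
    fix k assume k: "k \<in> {0..<r}"
    have "g'' k \<in> Y \<rightarrow> Y" using assms k unfolding xyz wreath_carrier_iff by (auto simp: PiE_iff Bij_imp_funcset)
    then show "compose Y ((\<lambda>k\<in>{0..<r}. compose Y (g (h' k)) (g' k)) (h'' k)) (g'' k)
        = compose Y (g (compose {0..<r} h' h'' k)) ((\<lambda>k\<in>{0..<r}. compose Y (g' (h'' k)) (g'' k)) k)"
      using Bij_apply_mem[OF h'' k] k by (simp add: compose_eq compose_assoc)
  qed
  moreover have "compose {0..<r} (compose {0..<r} h h') h'' = compose {0..<r} h (compose {0..<r} h' h'')"
    using h'' by (metis compose_assoc Bij_imp_funcset)
  ultimately show ?thesis unfolding xyz wreath_mult_eq by simp
qed

lemma wreath_one_mult: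
  assumes "x \<in> carrier (wreath Y r)" shows "\<one>\<^bsub>wreath Y r\<^esub> \<otimes>\<^bsub>wreath Y r\<^esub> x = x"
proof -
  obtain g h where xe: "x = (g, h)" by fastforce
  have h: "h \<in> Bij {0..<r}" and g: "g \<in> {0..<r} \<rightarrow>\<^sub>E Bij Y"
    using assms unfolding xe wreath_carrier_iff by auto
  have "(\<lambda>k\<in>{0..<r}. compose Y ((\<lambda>k\<in>{0..<r}. (\<lambda>x\<in>Y. x)) (h k)) (g k)) = (\<lambda>k\<in>{0..<r}. g k)"
  proof (rule restrict_ext)
    fix k assume k: "k \<in> {0..<r}"
    then have "g k \<in> Bij Y" using g by auto
    then show "compose Y ((\<lambda>k\<in>{0..<r}. (\<lambda>x\<in>Y. x)) (h k)) (g k) = g k"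
      using k Bij_apply_mem[OF h k] by (simp add: Id_compose Bij_imp_funcset Bij_imp_extensional)
  qed
  moreover have "(\<lambda>k\<in>{0..<r}. g k) = g"
    using g by (simp add: PiE_iff extensional_restrict)
  moreover have "compose {0..<r} (\<lambda>k\<in>{0..<r}. k) h = h"
    using h by (simp add: Id_compose Bij_imp_funcset Bij_imp_extensional)
  ultimately show ?thesis unfolding xe wreath_one_eq wreath_mult_eq by simp
qed

lemma wreath_inv_ex:
  assumes "x \<in> carrier (wreath Y r)"
  shows "\<exists>y\<in>carrier (wreath Y r). y \<otimes>\<^bsub>wreath Y r\<^esub> x = \<one>\<^bsub>wreath Y r\<^esub>"
proof -
  obtain g h where xe: "x = (g, h)" by fastforce
  have h: "h \<in> Bij {0..<r}" and g: "\<And>k. k \<in> {0..<r} \<Longrightarrow> g k \<in> Bij Y"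
    using assms unfolding xe wreath_carrier_iff by auto
  define h1 where "h1 = restrict (inv_into {0..<r} h) {0..<r}"
  define g1 where "g1 = (\<lambda>k\<in>{0..<r}. restrict (inv_into Y (g (h1 k))) Y)"
  have h1: "h1 \<in> Bij {0..<r}" unfolding h1_def using restrict_inv_into_Bij[OF h] by simp
  have "(g1, h1) \<in> carrier (wreath Y r)"
    unfolding wreath_carrier_iff g1_def using h1 g Bij_apply_mem[OF h1]
    by (auto intro!: restrict_inv_into_Bij[simplified])
  moreover have "(\<lambda>k\<in>{0..<r}. compose Y (g1 (h k)) (g k)) = (\<lambda>k\<in>{0..<r}. (\<lambda>x\<in>Y. x))"
  proof (rule restrict_ext)
    fix k assume k: "k \<in> {0..<r}"
    have hk: "h k \<in> {0..<r}" using Bij_apply_mem[OF h k] .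
    have "h1 (h k) = k" unfolding h1_def using hk k h by (simp add: Bij_def bij_betw_def inv_into_f_f)
    then show "compose Y (g1 (h k)) (g k) = (\<lambda>x\<in>Y. x)"
      unfolding g1_def using hk Bij_compose_restrict_eq[OF g[OF k]] by simp
  qed
  moreover have "compose {0..<r} h1 h = (\<lambda>k\<in>{0..<r}. k)"
    unfolding h1_def by (rule Bij_compose_restrict_eq[OF h])
  ultimately have "(g1, h1) \<in> carrier (wreath Y r) \<and> (g1, h1) \<otimes>\<^bsub>wreath Y r\<^esub> x = \<one>\<^bsub>wreath Y r\<^esub>"
    unfolding xe wreath_mult_eq wreath_one_eq by simp
  then show ?thesis by blast
qed

lemma group_wreath: "group (wreath Y r)"
  by (rule groupI) (use wreath_mult_closed wreath_one_closed wreath_mult_assoc wreath_one_mult wreath_inv_ex in auto)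

lemma BijGroup_mult_apply:
  "f \<in> carrier (BijGroup S) \<Longrightarrow> g \<in> carrier (BijGroup S) \<Longrightarrow> x \<in> S \<Longrightarrow>
     (f \<otimes>\<^bsub>BijGroup S\<^esub> g) x = f (g x)"
  by (simp add: BijGroup_def compose_def)

lemma BijGroup_one_apply: "x \<in> S \<Longrightarrow> \<one>\<^bsub>BijGroup S\<^esub> x = x"
  by (simp add: BijGroup_def)

lemma BijGroup_apply_mem: "f \<in> carrier (BijGroup S) \<Longrightarrow> x \<in> S \<Longrightarrow> f x \<in> S"
  by (simp add: BijGroup_def Bij_apply_mem)

lemma BijGroup_inv_apply:
  assumes "f \<in> carrier (BijGroup S)" "x \<in> S"
  shows "(inv\<^bsub>BijGroup S\<^esub> f) (f x) = x" and "f ((inv\<^bsub>BijGroup S\<^esub> f) x) = x"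
  using assms group.l_inv[OF group_BijGroup] group.r_inv[OF group_BijGroup]
    group.inv_closed[OF group_BijGroup]
  by (metis BijGroup_mult_apply BijGroup_one_apply)+

lemma BijGroup_eqI:
  "f \<in> carrier (BijGroup S) \<Longrightarrow> g \<in> carrier (BijGroup S) \<Longrightarrow> (\<And>x. x \<in> S \<Longrightarrow> f x = g x) \<Longrightarrow> f = g"
  by (rule extensionalityI[of f S g]) (auto simp: BijGroup_def intro: Bij_imp_extensional)

lemma in_set_mult_iff: "x \<in> A <#>\<^bsub>G\<^esub> B \<longleftrightarrow> (\<exists>a\<in>A. \<exists>b\<in>B. x = a \<otimes>\<^bsub>G\<^esub> b)"
  unfolding set_mult_def by blast

section \<open>Commutators and minimal normal subgroups\<close>

context group
begin

lemma inv_mult_cancel_left [simp]: "x \<in> carrier G \<Longrightarrow> z \<in> carrier G \<Longrightarrow> inv x \<otimes> (x \<otimes> z) = z"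
  by (simp add: m_assoc[symmetric])

lemma mult_inv_cancel_left [simp]: "x \<in> carrier G \<Longrightarrow> z \<in> carrier G \<Longrightarrow> x \<otimes> (inv x \<otimes> z) = z"
  by (simp add: m_assoc[symmetric])

lemma commute_if_commutator_eq_one:
  assumes "x \<in> carrier G" "y \<in> carrier G" "x \<otimes> y \<otimes> inv x \<otimes> inv y = \<one>"
  shows "x \<otimes> y = y \<otimes> x"
proof -
  have "x \<otimes> y = (x \<otimes> y \<otimes> inv x \<otimes> inv y) \<otimes> (y \<otimes> x)"
    using assms(1,2) by (simp add: m_assoc)
  then show ?thesis using assms by simp
qed

lemma subgroup_set_mult_of_commuting:
  assumes A: "subgroup A G" and C: "subgroup C G"
    and comm: "\<And>a c. a \<in> A \<Longrightarrow> c \<in> C \<Longrightarrow> a \<otimes> c = c \<otimes> a"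
  shows "subgroup (A <#> C) G"
proof (rule subgroupI)
  show "A <#> C \<subseteq> carrier G"
    using subgroup.mem_carrier[OF A] subgroup.mem_carrier[OF C] by (auto simp: in_set_mult_iff)
  have "\<one> \<otimes> \<one> \<in> A <#> C"
    using subgroup.one_closed[OF A] subgroup.one_closed[OF C] unfolding in_set_mult_iff by blast
  then show "A <#> C \<noteq> {}" by blast
next
  fix x assume "x \<in> A <#> C"
  then obtain a c where ac: "a \<in> A" "c \<in> C" "x = a \<otimes> c" by (auto simp: in_set_mult_iff)
  have "inv x = inv a \<otimes> inv c"
    using ac comm[OF subgroup.m_inv_closed[OF A ac(1)] subgroup.m_inv_closed[OF C ac(2)]]
      subgroup.mem_carrier[OF A] subgroup.mem_carrier[OF C]
    by (simp add: inv_mult_group)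
  then show "inv x \<in> A <#> C"
    using ac subgroup.m_inv_closed[OF A] subgroup.m_inv_closed[OF C] by (auto simp: in_set_mult_iff)
next
  fix x y assume "x \<in> A <#> C" "y \<in> A <#> C"
  then obtain a c a' c' where ac: "a \<in> A" "c \<in> C" "x = a \<otimes> c" "a' \<in> A" "c' \<in> C" "y = a' \<otimes> c'"
    by (auto simp: in_set_mult_iff)
  have [simp]: "a \<in> carrier G" "c \<in> carrier G" "a' \<in> carrier G" "c' \<in> carrier G"
    using ac subgroup.mem_carrier[OF A] subgroup.mem_carrier[OF C] by auto
  have "x \<otimes> y = a \<otimes> (c \<otimes> a') \<otimes> c'" using ac by (simp add: m_assoc)
  also have "c \<otimes> a' = a' \<otimes> c" using comm[of a' c] ac by simp
  also have "a \<otimes> (a' \<otimes> c) \<otimes> c' = (a \<otimes> a') \<otimes> (c \<otimes> c')" by (simp add: m_assoc)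
  finally show "x \<otimes> y \<in> A <#> C"
    using ac subgroup.m_closed[OF A] subgroup.m_closed[OF C] unfolding in_set_mult_iff by blast
qed

lemma conj_mem_of_normal_in_subgroup:
  assumes "subgroup H G" "N \<lhd> G\<lparr>carrier := H\<rparr>" "x \<in> H" "n \<in> N"
  shows "x \<otimes> n \<otimes> inv x \<in> N"
proof -
  have "x \<otimes>\<^bsub>G\<lparr>carrier := H\<rparr>\<^esub> n \<otimes>\<^bsub>G\<lparr>carrier := H\<rparr>\<^esub> inv\<^bsub>G\<lparr>carrier := H\<rparr>\<^esub> x \<in> N"
    using group.normal_inv_iff[OF subgroup_imp_group[OF assms(1)]] assms(2-4) by simp
  then show ?thesis using assms(1,3) by simp
qed

lemma normal_in_subgroupI:
  assumes H: "subgroup H G" and N: "subgroup N G" "N \<subseteq> H"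
    and conj: "\<And>x n. x \<in> H \<Longrightarrow> n \<in> N \<Longrightarrow> x \<otimes> n \<otimes> inv x \<in> N"
  shows "N \<lhd> G\<lparr>carrier := H\<rparr>"
  using group.normal_inv_iff[OF subgroup_imp_group[OF H]] subgroup_incl[OF N(1) H N(2)] H conj
  by simp

lemma conj_mem_generate:
  assumes g: "g \<in> carrier G" and A: "A \<subseteq> carrier G" and S: "S \<subseteq> carrier G"
    and AS: "\<And>a. a \<in> A \<Longrightarrow> g \<otimes> a \<otimes> inv g \<in> S"
    and x: "x \<in> generate G A"
  shows "g \<otimes> x \<otimes> inv g \<in> generate G S"
  using x
proof (induction rule: generate.induct)
  case one
  then show ?case using g generate.one by (metis r_inv r_one)
next
  case (incl h)
  then show ?case using AS generate.incl by metis
next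
  case (inv h)
  then have "g \<otimes> inv h \<otimes> inv g = inv (g \<otimes> h \<otimes> inv g)"
    using g A by (auto simp: inv_mult_group m_assoc)
  then show ?case using AS[OF inv] generate.incl generate_m_inv_closed[OF S] by metis
next
  case (eng h1 h2)
  have "h1 \<in> carrier G" "h2 \<in> carrier G" using eng.hyps generate_in_carrier[OF A] by blast+
  then have "g \<otimes> (h1 \<otimes> h2) \<otimes> inv g = (g \<otimes> h1 \<otimes> inv g) \<otimes> (g \<otimes> h2 \<otimes> inv g)"
    using g by (simp add: m_assoc)
  then show ?case using generate.eng[OF eng.IH] by simp
qed

lemma commute_generate:
  assumes x: "x \<in> carrier G" and A: "A \<subseteq> carrier G"
    and comm: "\<And>a. a \<in> A \<Longrightarrow> x \<otimes> a = a \<otimes> x"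
    and y: "y \<in> generate G A"
  shows "x \<otimes> y = y \<otimes> x"
  using y
proof (induction rule: generate.induct)
  case (inv h)
  have h: "h \<in> carrier G" using inv A by blast
  have "x \<otimes> inv h = inv h \<otimes> (h \<otimes> x) \<otimes> inv h" using x h by (simp add: m_assoc)
  also have "h \<otimes> x = x \<otimes> h" using comm[OF inv] by simp
  also have "inv h \<otimes> (x \<otimes> h) \<otimes> inv h = inv h \<otimes> x" using x h by (simp add: m_assoc)
  finally show ?case .
next
  case (eng h1 h2)
  have "h1 \<in> carrier G" "h2 \<in> carrier G" using eng.hyps generate_in_carrier[OF A] by blast+
  then show ?case using eng.IH x by (metis m_assoc)
qed (use x comm in auto)

lemma normal_conj_mem: "N \<lhd> G \<Longrightarrow> x \<in> carrier G \<Longrightarrow> n \<in> N \<Longrightarrow> x \<otimes> n \<otimes> inv x \<in> N"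
  using normal_inv_iff by blast

definition centre :: "'a set \<Rightarrow> 'a set" where
  "centre N = {z \<in> N. \<forall>y\<in>N. z \<otimes> y = y \<otimes> z}"

lemma subgroup_centre:
  assumes N: "subgroup N G" shows "subgroup (centre N) G"
proof (rule subgroupI)
  have [simp]: "y \<in> N \<Longrightarrow> y \<in> carrier G" for y using subgroup.mem_carrier[OF N] .
  show "centre N \<subseteq> carrier G" unfolding centre_def by auto
  have "\<one> \<in> centre N" using subgroup.one_closed[OF N] unfolding centre_def by simp
  then show "centre N \<noteq> {}" by blast
next
  have [simp]: "y \<in> N \<Longrightarrow> y \<in> carrier G" for y using subgroup.mem_carrier[OF N] .
  fix z assume z: "z \<in> centre N"
  then have zN: "z \<in> N" and zy: "\<And>y. y \<in> N \<Longrightarrow> z \<otimes> y = y \<otimes> z" unfolding centre_def by auto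
  have "inv z \<otimes> y = y \<otimes> inv z" if y: "y \<in> N" for y
  proof -
    have "y \<otimes> inv z = inv z \<otimes> (z \<otimes> y) \<otimes> inv z" using y zN by (simp add: m_assoc)
    also have "\<dots> = inv z \<otimes> (y \<otimes> z) \<otimes> inv z" by (simp only: zy[OF y])
    also have "\<dots> = inv z \<otimes> y" using y zN by (simp add: m_assoc)
    finally show ?thesis by (rule sym)
  qed
  then show "inv z \<in> centre N" using subgroup.m_inv_closed[OF N zN] unfolding centre_def by blast
next
  have [simp]: "y \<in> N \<Longrightarrow> y \<in> carrier G" for y using subgroup.mem_carrier[OF N] .
  fix z z' assume "z \<in> centre N" "z' \<in> centre N"
  then have zN: "z \<in> N" "z' \<in> N" and zy: "\<And>y. y \<in> N \<Longrightarrow> z \<otimes> y = y \<otimes> z" "\<And>y. y \<in> N \<Longrightarrow> z' \<otimes> y = y \<otimes> z'"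
    unfolding centre_def by auto
  have "z \<otimes> z' \<otimes> y = y \<otimes> (z \<otimes> z')" if y: "y \<in> N" for y
  proof -
    have "z \<otimes> z' \<otimes> y = z \<otimes> (y \<otimes> z')" using y zN by (simp add: m_assoc zy(2))
    also have "\<dots> = (z \<otimes> y) \<otimes> z'" using y zN by (simp add: m_assoc)
    also have "\<dots> = y \<otimes> (z \<otimes> z')" using y zN by (simp add: m_assoc zy(1))
    finally show ?thesis .
  qed
  then show "z \<otimes> z' \<in> centre N" using subgroup.m_closed[OF N zN] unfolding centre_def by blast
qed

lemma normal_centre:
  assumes N: "N \<lhd> G" shows "centre N \<lhd> G"
  unfolding normal_inv_iff
proof (intro conjI ballI)
  show "subgroup (centre N) G" using subgroup_centre[OF normal_imp_subgroup[OF N]] .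
  have [simp]: "y \<in> N \<Longrightarrow> y \<in> carrier G" for y using subgroup.mem_carrier[OF normal_imp_subgroup[OF N]] .
  fix g z assume g: "g \<in> carrier G" and z: "z \<in> centre N"
  then have zN: "z \<in> N" and zy: "\<And>y. y \<in> N \<Longrightarrow> z \<otimes> y = y \<otimes> z" unfolding centre_def by auto
  have "g \<otimes> z \<otimes> inv g \<otimes> y = y \<otimes> (g \<otimes> z \<otimes> inv g)" if y: "y \<in> N" for y
  proof -
    let ?y = "inv g \<otimes> y \<otimes> g"
    have y': "?y \<in> N" using normal_conj_mem[OF N, of "inv g" y] g y by simp
    have "g \<otimes> z \<otimes> inv g \<otimes> y = g \<otimes> (z \<otimes> ?y) \<otimes> inv g" using g zN y by (simp add: m_assoc)
    also have "\<dots> = g \<otimes> (?y \<otimes> z) \<otimes> inv g" by (simp only: zy[OF y'])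
    also have "\<dots> = y \<otimes> (g \<otimes> z \<otimes> inv g)" using g zN y by (simp add: m_assoc)
    finally show ?thesis .
  qed
  moreover have "g \<otimes> z \<otimes> inv g \<in> N" using normal_conj_mem[OF N g zN] .
  ultimately show "g \<otimes> z \<otimes> inv g \<in> centre N" unfolding centre_def by blast
qed

lemma centre_of_minimal_normal_nonabelian:
  assumes N: "minimal_normal G N" and nonab: "nonabelian_set G N"
  shows "centre N = {\<one>}"
proof -
  have "N \<lhd> G" using N unfolding minimal_normal_def by blast
  then have "centre N \<lhd> G" by (rule normal_centre)
  moreover have "centre N \<noteq> N" using nonab unfolding nonabelian_set_def centre_def by blast
  moreover have "centre N \<subseteq> N" unfolding centre_def by blast
  ultimately show ?thesis using N unfolding minimal_normal_def by blast
qed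

lemma rcos_eq_iff:
  assumes "subgroup H G" "x \<in> carrier G" "y \<in> carrier G"
  shows "H #> x = H #> y \<longleftrightarrow> y \<otimes> inv x \<in> H"
  using repr_independenceD[OF assms(1,3)] repr_independence[OF _ assms(2,1)]
    subgroup.rcos_module[OF assms(1) is_group assms(2,3)] by blast

text \<open>If \<open>T\<close> met every \<open>F j\<close> trivially, an element of \<open>T\<close> would commute with all \<open>F j\<close>, since its
  commutators with \<open>F j\<close> lie in \<open>T \<inter> F j\<close>.\<close>
lemma simple_normal_subset_member:
  assumes N: "subgroup N G" and T: "T \<lhd> G\<lparr>carrier := N\<rparr>" "simple_group (G\<lparr>carrier := T\<rparr>)"
    and F: "\<And>j. j \<in> J \<Longrightarrow> F j \<lhd> G\<lparr>carrier := N\<rparr>"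
    and centre: "\<And>x. x \<in> N \<Longrightarrow> (\<And>j y. j \<in> J \<Longrightarrow> y \<in> F j \<Longrightarrow> x \<otimes> y = y \<otimes> x) \<Longrightarrow> x = \<one>"
  shows "\<exists>j\<in>J. T \<subseteq> F j"
proof -
  have T_sub: "subgroup T G" using incl_subgroup[OF N normal_imp_subgroup[OF T(1)]] .
  have T_N: "T \<subseteq> N" using subgroup.subset[OF normal_imp_subgroup[OF T(1)]] by simp
  have F_sub: "\<And>j. j \<in> J \<Longrightarrow> subgroup (F j) G" using incl_subgroup[OF N normal_imp_subgroup[OF F]] .
  have F_N: "\<And>j. j \<in> J \<Longrightarrow> F j \<subseteq> N" using subgroup.subset[OF normal_imp_subgroup[OF F]] by simp
  have [simp]: "x \<in> N \<Longrightarrow> x \<in> carrier G" for x using subgroup.mem_carrier[OF N] .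
  obtain t where t: "t \<in> T" "t \<noteq> \<one>"
    using simple_group.simple_not_triv[OF T(2)] subgroup.one_closed[OF T_sub] by auto
  have "\<exists>j\<in>J. T \<inter> F j \<noteq> {\<one>}"
  proof (rule ccontr)
    assume "\<not> ?thesis"
    then have trivial: "\<And>j. j \<in> J \<Longrightarrow> T \<inter> F j = {\<one>}" by blast
    have "t \<otimes> y = y \<otimes> t" if j: "j \<in> J" and y: "y \<in> F j" for j y
    proof (rule commute_if_commutator_eq_one)
      have tN: "t \<in> N" and yN: "y \<in> N" using t T_N y F_N[OF j] by auto
      have "t \<otimes> y \<otimes> inv t \<otimes> inv y = t \<otimes> (y \<otimes> inv t \<otimes> inv y)" using tN yN by (simp add: m_assoc)
      then have "t \<otimes> y \<otimes> inv t \<otimes> inv y \<in> T"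
        using subgroup.m_closed[OF T_sub t(1) conj_mem_of_normal_in_subgroup[OF N T(1) yN
              subgroup.m_inv_closed[OF T_sub t(1)]]] by simp
      moreover have "t \<otimes> y \<otimes> inv t \<otimes> inv y \<in> F j"
        using subgroup.m_closed[OF F_sub[OF j] conj_mem_of_normal_in_subgroup[OF N F[OF j] tN y]
              subgroup.m_inv_closed[OF F_sub[OF j] y]] .
      ultimately show "t \<otimes> y \<otimes> inv t \<otimes> inv y = \<one>" using trivial[OF j] by blast
    qed (use t T_N F_N[OF j] y in auto)
    then show False using centre[of t] t T_N by blast
  qed
  then obtain j where j: "j \<in> J" and nontriv: "T \<inter> F j \<noteq> {\<one>}" by blast
  have "T \<inter> F j \<lhd> G\<lparr>carrier := T\<rparr>"
  proof (rule normal_in_subgroupI[OF T_sub subgroups_Inter_pair[OF T_sub F_sub[OF j]]])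
    fix x n assume "x \<in> T" "n \<in> T \<inter> F j"
    then show "x \<otimes> n \<otimes> inv x \<in> T \<inter> F j"
      using conj_mem_of_normal_in_subgroup[OF N F[OF j]] conj_mem_of_normal_in_subgroup[OF T_sub]
        subgroup.m_closed[OF T_sub] subgroup.m_inv_closed[OF T_sub] T_N by (auto simp: m_assoc)
  qed blast
  then have "T \<inter> F j = T"
    using simple_group.no_real_normal_subgroup[OF T(2)] nontriv by fastforce
  then show ?thesis using j by blast
qed

end

context group_hom
begin

lemma normal_image:
  assumes N: "N \<lhd> G" shows "h ` N \<lhd> H\<lparr>carrier := h ` carrier G\<rparr>"
proof (rule H.normal_in_subgroupI)
  show "subgroup (h ` carrier G) H" by (rule img_is_subgroup)
  have N_sub: "subgroup N G" using normal_imp_subgroup[OF N] .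
  then show "subgroup (h ` N) H" by (rule subgroup_img_is_subgroup)
  show "h ` N \<subseteq> h ` carrier G" using subgroup.subset[OF N_sub] by (rule image_mono)
  fix x n assume "x \<in> h ` carrier G" "n \<in> h ` N"
  then obtain g m where g: "g \<in> carrier G" and m: "m \<in> N" and xn: "x = h g" "n = h m" by blast
  have "m \<in> carrier G" using subgroup.mem_carrier[OF N_sub m] .
  then have "x \<otimes>\<^bsub>H\<^esub> n \<otimes>\<^bsub>H\<^esub> inv\<^bsub>H\<^esub> x = h (g \<otimes> m \<otimes> inv g)"
    using g unfolding xn by simp
  then show "x \<otimes>\<^bsub>H\<^esub> n \<otimes>\<^bsub>H\<^esub> inv\<^bsub>H\<^esub> x \<in> h ` N" using G.normal_conj_mem[OF N g m] by simp
qed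

lemma normal_preimage:
  assumes L: "L \<lhd> H\<lparr>carrier := h ` carrier G\<rparr>" and N: "N \<lhd> G"
  shows "{m \<in> N. h m \<in> L} \<lhd> G"
  unfolding G.normal_inv_iff
proof (intro conjI ballI)
  have N_sg: "subgroup N G" using normal_imp_subgroup[OF N] .
  have [simp]: "x \<in> N \<Longrightarrow> x \<in> carrier G" for x using subgroup.mem_carrier[OF N_sg] .
  have L_sg: "subgroup L H" using H.incl_subgroup[OF img_is_subgroup normal_imp_subgroup[OF L]] .
  show "subgroup {m \<in> N. h m \<in> L} G"
  proof (rule G.subgroupI)
    show "{m \<in> N. h m \<in> L} \<subseteq> carrier G" by auto
    have "\<one> \<in> {m \<in> N. h m \<in> L}" using subgroup.one_closed[OF N_sg] subgroup.one_closed[OF L_sg] by simp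
    then show "{m \<in> N. h m \<in> L} \<noteq> {}" by blast
  next
    fix a assume "a \<in> {m \<in> N. h m \<in> L}"
    then show "inv a \<in> {m \<in> N. h m \<in> L}"
      using subgroup.m_inv_closed[OF N_sg] subgroup.m_inv_closed[OF L_sg] by simp
  next
    fix a b assume "a \<in> {m \<in> N. h m \<in> L}" "b \<in> {m \<in> N. h m \<in> L}"
    then show "a \<otimes> b \<in> {m \<in> N. h m \<in> L}"
      using subgroup.m_closed[OF N_sg] subgroup.m_closed[OF L_sg] by simp
  qed
  fix x n assume x: "x \<in> carrier G" and n: "n \<in> {m \<in> N. h m \<in> L}"
  then have "h x \<otimes>\<^bsub>H\<^esub> h n \<otimes>\<^bsub>H\<^esub> inv\<^bsub>H\<^esub> (h x) \<in> L"
    using H.conj_mem_of_normal_in_subgroup[OF img_is_subgroup L] by auto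
  then show "x \<otimes> n \<otimes> inv x \<in> {m \<in> N. h m \<in> L}"
    using x n G.normal_conj_mem[OF N x] by auto
qed

lemma minimal_normal_image:
  assumes inj: "inj_on h (carrier G)" and N: "minimal_normal G N"
  shows "minimal_normal (H\<lparr>carrier := h ` carrier G\<rparr>) (h ` N)"
  unfolding minimal_normal_def
proof (intro conjI allI impI)
  have N_normal: "N \<lhd> G" using N unfolding minimal_normal_def by blast
  then show "h ` N \<lhd> H\<lparr>carrier := h ` carrier G\<rparr>" by (rule normal_image)
  have N_sg: "subgroup N G" using normal_imp_subgroup[OF N_normal] .
  obtain n where n: "n \<in> N" "n \<noteq> \<one>"
    using N subgroup.one_closed[OF N_sg] unfolding minimal_normal_def by blast
  then have "h n \<noteq> h \<one>"
    using inj subgroup.mem_carrier[OF N_sg] unfolding inj_on_def by (meson G.one_closed)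
  then show "h ` N \<noteq> {\<one>\<^bsub>H\<lparr>carrier := h ` carrier G\<rparr>\<^esub>}" using n by auto
  fix L assume L: "L \<lhd> H\<lparr>carrier := h ` carrier G\<rparr>" and L_N: "L \<subseteq> h ` N"
  have "{m \<in> N. h m \<in> L} = {\<one>} \<or> {m \<in> N. h m \<in> L} = N"
    using N normal_preimage[OF L N_normal] unfolding minimal_normal_def by blast
  moreover have "L = h ` {m \<in> N. h m \<in> L}" using L_N by blast
  ultimately show "L = {\<one>\<^bsub>H\<lparr>carrier := h ` carrier G\<rparr>\<^esub>} \<or> L = h ` N" by auto
qed

lemma nonabelian_image:
  assumes "inj_on h (carrier G)" "N \<subseteq> carrier G" "nonabelian_set G N"
  shows "nonabelian_set H (h ` N)"
proof -
  obtain x y where xy: "x \<in> N" "y \<in> N" "x \<otimes> y \<noteq> y \<otimes> x" using assms(3) unfolding nonabelian_set_def by blast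
  moreover have "x \<in> carrier G" "y \<in> carrier G" using xy assms(2) by auto
  ultimately have "h (x \<otimes> y) \<noteq> h (y \<otimes> x)" using assms(1) unfolding inj_on_def by blast
  with \<open>x \<in> carrier G\<close> \<open>y \<in> carrier G\<close> have "h x \<otimes>\<^bsub>H\<^esub> h y \<noteq> h y \<otimes>\<^bsub>H\<^esub> h x" by simp
  then show ?thesis using xy unfolding nonabelian_set_def by blast
qed

end

section \<open>Direct decompositions\<close>

locale direct_decomposition = group G for G (structure) +
  fixes M :: "'a set" and r :: nat and Ms :: "nat \<Rightarrow> 'a set"
  assumes direct_decomp: "direct_decomp G M r Ms"
begin

definition complement :: "nat \<Rightarrow> 'a set" where
  "complement i = generate G (\<Union>j\<in>{0..<r} - {i}. Ms j)"

lemma subgroup_M: "subgroup M G"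
  using direct_decomp unfolding direct_decomp_def by blast

lemma M_eq_generate: "M = generate G (\<Union>i<r. Ms i)"
  using direct_decomp unfolding direct_decomp_def by blast

lemma factor_normal: "i < r \<Longrightarrow> Ms i \<lhd> G\<lparr>carrier := M\<rparr>"
  using direct_decomp unfolding direct_decomp_def by blast

lemma factor_inter_complement: "i < r \<Longrightarrow> Ms i \<inter> complement i = {\<one>}"
  using direct_decomp unfolding direct_decomp_def complement_def by blast

lemma subgroup_factor: "i < r \<Longrightarrow> subgroup (Ms i) G"
  using incl_subgroup[OF subgroup_M normal_imp_subgroup[OF factor_normal]] .

lemma factor_subset: "i < r \<Longrightarrow> Ms i \<subseteq> M"
  using subgroup.subset[OF normal_imp_subgroup[OF factor_normal]] by simp

lemma factor_carrier: "i < r \<Longrightarrow> x \<in> Ms i \<Longrightarrow> x \<in> carrier G"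
  using subgroup.mem_carrier[OF subgroup_factor] .

lemma factor_conj: "i < r \<Longrightarrow> m \<in> M \<Longrightarrow> x \<in> Ms i \<Longrightarrow> m \<otimes> x \<otimes> inv m \<in> Ms i"
  using conj_mem_of_normal_in_subgroup[OF subgroup_M factor_normal] .

lemma complement_generators_subset: "(\<Union>j\<in>{0..<r} - {i}. Ms j) \<subseteq> M"
  using factor_subset by (intro UN_least) auto

lemma subgroup_complement: "subgroup (complement i) G"
  unfolding complement_def
  by (rule generate_is_subgroup) (use complement_generators_subset subgroup.subset[OF subgroup_M] in blast)

lemma complement_carrier: "x \<in> complement i \<Longrightarrow> x \<in> carrier G"
  using subgroup.mem_carrier[OF subgroup_complement] .

lemma complement_subset: "complement i \<subseteq> M"
  unfolding complement_def
  using generate_subgroup_incl[OF complement_generators_subset subgroup_M] .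

lemma factor_subset_complement:
  assumes "j < r" "j \<noteq> i" shows "Ms j \<subseteq> complement i"
proof
  fix x assume "x \<in> Ms j"
  with assms have "x \<in> (\<Union>j\<in>{0..<r} - {i}. Ms j)" by auto
  then show "x \<in> complement i" unfolding complement_def by (rule generate.incl)
qed

lemma complement_conj:
  assumes m: "m \<in> M" and x: "x \<in> complement i"
  shows "m \<otimes> x \<otimes> inv m \<in> complement i"
  unfolding complement_def
proof (rule conj_mem_generate)
  show "m \<in> carrier G" using m subgroup.mem_carrier[OF subgroup_M] by blast
  show "(\<Union>j\<in>{0..<r} - {i}. Ms j) \<subseteq> carrier G"
    using complement_generators_subset subgroup.subset[OF subgroup_M] by blast
  then show "(\<Union>j\<in>{0..<r} - {i}. Ms j) \<subseteq> carrier G" .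
  show "x \<in> generate G (\<Union>j\<in>{0..<r} - {i}. Ms j)" using x unfolding complement_def .
  fix a assume "a \<in> (\<Union>j\<in>{0..<r} - {i}. Ms j)"
  then obtain j where j: "j \<in> {0..<r} - {i}" "a \<in> Ms j" by blast
  then have "m \<otimes> a \<otimes> inv m \<in> Ms j" using factor_conj[OF _ m] by simp
  then show "m \<otimes> a \<otimes> inv m \<in> (\<Union>j\<in>{0..<r} - {i}. Ms j)" using j by blast
qed

lemma factor_complement_commute:
  assumes i: "i < r" and a: "a \<in> Ms i" and b: "b \<in> complement i"
  shows "a \<otimes> b = b \<otimes> a"
proof -
  have [simp]: "a \<in> carrier G" "b \<in> carrier G"
    using a b subgroup.mem_carrier[OF subgroup_factor[OF i]] subgroup.mem_carrier[OF subgroup_complement]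
    by auto
  have aM: "a \<in> M" using a factor_subset[OF i] by blast
  have bM: "b \<in> M" using b complement_subset by blast
  let ?c = "a \<otimes> b \<otimes> inv a \<otimes> inv b"
  have "?c = a \<otimes> (b \<otimes> inv a \<otimes> inv b)" by (simp add: m_assoc)
  then have "?c \<in> Ms i"
    using subgroup.m_closed[OF subgroup_factor[OF i] a
        factor_conj[OF i bM subgroup.m_inv_closed[OF subgroup_factor[OF i] a]]] by simp
  moreover have "?c \<in> complement i"
    using subgroup.m_closed[OF subgroup_complement complement_conj[OF aM b]
        subgroup.m_inv_closed[OF subgroup_complement b]] .
  ultimately have "?c = \<one>" using factor_inter_complement[OF i] by blast
  then show ?thesis by (intro commute_if_commutator_eq_one) simp_all
qed

lemma factor_complement_unique:
  assumes i: "i < r" and a: "a \<in> Ms i" "a' \<in> Ms i" and b: "b \<in> complement i" "b' \<in> complement i"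
    and eq: "a \<otimes> b = a' \<otimes> b'"
  shows "a = a'"
proof -
  have [simp]: "a \<in> carrier G" "a' \<in> carrier G" "b \<in> carrier G" "b' \<in> carrier G"
    using a b subgroup.mem_carrier[OF subgroup_factor[OF i]] subgroup.mem_carrier[OF subgroup_complement]
    by auto
  have "inv a' \<otimes> (a \<otimes> b) \<otimes> inv b = inv a' \<otimes> (a' \<otimes> b') \<otimes> inv b" using eq by simp
  then have e: "inv a' \<otimes> a = b' \<otimes> inv b" by (simp add: m_assoc)
  have "inv a' \<otimes> a \<in> Ms i"
    using subgroup.m_closed[OF subgroup_factor[OF i] subgroup.m_inv_closed[OF subgroup_factor[OF i] a(2)] a(1)] .
  moreover have "inv a' \<otimes> a \<in> complement i"
    unfolding e using subgroup.m_closed[OF subgroup_complement b(2) subgroup.m_inv_closed[OF subgroup_complement b(1)]] .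
  ultimately have "inv a' \<otimes> a = \<one>" using factor_inter_complement[OF i] by blast
  then have "inv a = inv a'" using inv_equality[of "inv a'" a] by simp
  then show ?thesis by (metis inv_inv \<open>a \<in> carrier G\<close> \<open>a' \<in> carrier G\<close>)
qed

lemma generate_subset_set_mult:
  assumes i: "i < r" and B: "\<And>j. j < r \<Longrightarrow> subgroup (B j) G" "\<And>j. j < r \<Longrightarrow> B j \<subseteq> Ms j"
  shows "generate G (\<Union>j<r. B j) \<subseteq> B i <#> complement i"
proof (rule generate_subgroup_incl)
  show "subgroup (B i <#> complement i) G"
    using subgroup_set_mult_of_commuting[OF B(1)[OF i] subgroup_complement]
      factor_complement_commute[OF i] B(2)[OF i] by blast
  show "(\<Union>j<r. B j) \<subseteq> B i <#> complement i"
  proof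
    fix x assume "x \<in> (\<Union>j<r. B j)"
    then obtain j where j: "j < r" "x \<in> B j" by blast
    then have [simp]: "x \<in> carrier G" using subgroup.mem_carrier[OF B(1)] by blast
    show "x \<in> B i <#> complement i"
    proof (cases "j = i")
      case True
      have "x = x \<otimes> \<one>" by simp
      then show ?thesis unfolding in_set_mult_iff
        using j True subgroup.one_closed[OF subgroup_complement] by blast
    next
      case False
      then have "x \<in> complement i" using j B(2) factor_subset_complement by blast
      moreover have "x = \<one> \<otimes> x" by simp
      ultimately show ?thesis unfolding in_set_mult_iff
        using subgroup.one_closed[OF B(1)[OF i]] by blast
    qed
  qed
qed

lemma M_subset_set_mult:
  assumes "i < r" shows "M \<subseteq> Ms i <#> complement i"
proof -
  have "generate G (\<Union>j<r. Ms j) \<subseteq> Ms i <#> complement i"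
    by (rule generate_subset_set_mult[OF assms]) (use subgroup_factor in auto)
  then show ?thesis using M_eq_generate by simp
qed

lemma commute_with_M:
  assumes x: "x \<in> carrier G" and comm: "\<And>j m. j < r \<Longrightarrow> m \<in> Ms j \<Longrightarrow> x \<otimes> m = m \<otimes> x"
    and y: "y \<in> M"
  shows "x \<otimes> y = y \<otimes> x"
  using commute_generate[OF x _ _ y[unfolded M_eq_generate]] comm
    subgroup.mem_carrier[OF subgroup_factor] by blast

lemma X_subgroup_subset_set_mult:
  assumes Y: "X_subgroup G r Ms Y" and i: "i < r"
  shows "Y \<subseteq> (Y \<inter> Ms i) <#> complement i"
proof -
  have Y_sub: "subgroup Y G" and Y_gen: "Y = generate G (\<Union>j<r. Y \<inter> Ms j)"
    using Y unfolding X_subgroup_def direct_decomp_def by simp_all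
  have "generate G (\<Union>j<r. Y \<inter> Ms j) \<subseteq> (Y \<inter> Ms i) <#> complement i"
    by (rule generate_subset_set_mult[OF i]) (auto intro: subgroups_Inter_pair[OF Y_sub subgroup_factor])
  then show ?thesis using equalityD1[OF Y_gen] by (rule subset_trans[rotated])
qed

lemma X_subgroup_factor_mem:
  assumes Y: "X_subgroup G r Ms Y" and i: "i < r"
    and a: "a \<in> Ms i" and b: "b \<in> complement i" and ab: "a \<otimes> b \<in> Y"
  shows "a \<in> Y"
proof -
  obtain k l where k: "k \<in> Y \<inter> Ms i" and l: "l \<in> complement i" and e: "a \<otimes> b = k \<otimes> l"
    using subsetD[OF X_subgroup_subset_set_mult[OF Y i] ab] unfolding in_set_mult_iff by blast
  have "a = k" using factor_complement_unique[OF i a _ b l e] k by blast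
  then show ?thesis using k by blast
qed

lemma generate_prefix_subset_complement:
  assumes "n \<le> r" "n \<le> j" shows "generate G (\<Union>i<n. Ms i) \<subseteq> complement j"
  unfolding complement_def
proof (rule mono_generate)
  show "(\<Union>i<n. Ms i) \<subseteq> (\<Union>k\<in>{0..<r} - {j}. Ms k)"
  proof
    fix x assume "x \<in> (\<Union>i<n. Ms i)"
    then obtain i where "i < n" "x \<in> Ms i" by blast
    with assms show "x \<in> (\<Union>k\<in>{0..<r} - {j}. Ms k)" by (intro UN_I[of i]) auto
  qed
qed

lemma generate_Suc_prefix_subset:
  assumes n: "n < r"
  shows "generate G (\<Union>i<Suc n. Ms i) \<subseteq> generate G (\<Union>i<n. Ms i) <#> Ms n"
proof (rule generate_subgroup_incl)
  let ?P = "generate G (\<Union>i<n. Ms i)"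
  have P_compl: "?P \<subseteq> complement n" using generate_prefix_subset_complement n by simp
  have "(\<Union>i<n. Ms i) \<subseteq> carrier G"
  proof (intro UN_least)
    fix i assume "i \<in> {..<n}"
    then show "Ms i \<subseteq> carrier G" using n subgroup.subset[OF subgroup_factor[of i]] by simp
  qed
  then have P: "subgroup ?P G" by (rule generate_is_subgroup)
  then show "subgroup (?P <#> Ms n) G"
    using subgroup_set_mult_of_commuting[OF P subgroup_factor[OF n]]
      factor_complement_commute[OF n] P_compl by (metis subsetD)
  show "(\<Union>i<Suc n. Ms i) \<subseteq> ?P <#> Ms n"
  proof
    fix z assume "z \<in> (\<Union>i<Suc n. Ms i)"
    then obtain i where i: "i < Suc n" "z \<in> Ms i" by blast
    then have [simp]: "z \<in> carrier G" using n subgroup.mem_carrier[OF subgroup_factor[of i]] by simp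
    show "z \<in> ?P <#> Ms n"
    proof (cases "i = n")
      case True
      have "z = \<one> \<otimes> z" by simp
      then show ?thesis unfolding in_set_mult_iff using True i generate.one by blast
    next
      case False
      then have "i < n" using i by simp
      then have "z \<in> ?P" using i generate.incl[of z "\<Union>i<n. Ms i" G] by blast
      moreover have "z = z \<otimes> \<one>" by simp
      ultimately show ?thesis unfolding in_set_mult_iff using subgroup.one_closed[OF subgroup_factor[OF n]] by blast
    qed
  qed
qed

lemma mem_subgroup_of_prefix_components:
  assumes Y: "subgroup Y G"
  shows "n \<le> r \<Longrightarrow> x \<in> generate G (\<Union>i<n. Ms i) \<Longrightarrow>
    (\<forall>i<n. x \<in> (Y \<inter> Ms i) <#> complement i) \<Longrightarrow> x \<in> Y"
proof (induction n arbitrary: x)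
  case 0
  then show ?case using generate_empty subgroup.one_closed[OF Y] by simp
next
  case (Suc n)
  have n: "n < r" using Suc.prems(1) by simp
  obtain y a where y: "y \<in> generate G (\<Union>i<n. Ms i)" and a: "a \<in> Ms n" and x: "x = y \<otimes> a"
    using subsetD[OF generate_Suc_prefix_subset[OF n] Suc.prems(2)] unfolding in_set_mult_iff by blast
  have y_compl: "y \<in> complement i" if "i \<ge> n" for i
    using generate_prefix_subset_complement[of n i] n that y by auto
  have [simp]: "y \<in> carrier G" "a \<in> carrier G"
    using y_compl[of n] a subgroup.mem_carrier[OF subgroup_complement]
      subgroup.mem_carrier[OF subgroup_factor[OF n]] by auto
  have "a \<in> Y"
  proof -
    obtain k c where k: "k \<in> Y \<inter> Ms n" and c: "c \<in> complement n" and e: "x = k \<otimes> c"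
      using Suc.prems(3) unfolding in_set_mult_iff by blast
    have "a \<otimes> y = k \<otimes> c"
      using x e factor_complement_commute[OF n a y_compl[of n]] by simp
    then show ?thesis using factor_complement_unique[OF n a _ y_compl[of n] c] k by blast
  qed
  moreover have "y \<in> Y"
  proof (rule Suc.IH)
    show "\<forall>i<n. y \<in> (Y \<inter> Ms i) <#> complement i"
    proof (intro allI impI)
      fix i assume i: "i < n"
      obtain k c where k: "k \<in> Y \<inter> Ms i" and c: "c \<in> complement i" and e: "x = k \<otimes> c"
        using Suc.prems(3) i unfolding in_set_mult_iff by (meson IntE IntI less_SucI)
      have a_compl: "a \<in> complement i" using factor_subset_complement[of n i] n i a by auto
      have [simp]: "k \<in> carrier G" "c \<in> carrier G"
        using k c subgroup.mem_carrier[OF subgroup_factor[of i]] subgroup.mem_carrier[OF subgroup_complement] n i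
        by auto
      have "y = x \<otimes> inv a" using x by (simp add: m_assoc)
      also have "\<dots> = k \<otimes> (c \<otimes> inv a)" using e by (simp add: m_assoc)
      finally have "y = k \<otimes> (c \<otimes> inv a)" .
      then show "y \<in> (Y \<inter> Ms i) <#> complement i" unfolding in_set_mult_iff
        using k subgroup.m_closed[OF subgroup_complement c subgroup.m_inv_closed[OF subgroup_complement a_compl]]
        by blast
    qed
  qed (use n y in auto)
  ultimately show ?case using x subgroup.m_closed[OF Y] by simp
qed

lemma mem_subgroup_of_components:
  assumes "subgroup Y G" "x \<in> M" "\<And>i. i < r \<Longrightarrow> x \<in> (Y \<inter> Ms i) <#> complement i"
  shows "x \<in> Y"
  using mem_subgroup_of_prefix_components[OF assms(1), of r x] assms(2,3) M_eq_generate by simp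

end

section \<open>A plinth with an invariant direct decomposition\<close>

locale plinth_decomposition =
  fixes \<Omega> :: "'a set" and G M :: "('a \<Rightarrow> 'a) set" and \<omega> :: 'a
    and r :: nat and Ms :: "nat \<Rightarrow> ('a \<Rightarrow> 'a) set"
  assumes innate: "innately_transitive_plinth \<Omega> G M"
    and nonab: "nonabelian_set (BijGroup \<Omega>) M"
    and base_point: "\<omega> \<in> \<Omega>"
    and dec: "direct_decomp (BijGroup \<Omega>) M r Ms"
    and nontriv: "\<forall>i<r. Ms i \<noteq> {\<one>\<^bsub>BijGroup \<Omega>\<^esub>}"
    and distinct: "inj_on Ms {0..<r}"
    and invariant: "invariant_decomp (BijGroup \<Omega>) G r Ms"
    and stabiliser_X_subgroup: "X_subgroup (BijGroup \<Omega>) r Ms (stabiliser M \<omega>)"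

sublocale plinth_decomposition \<subseteq> direct_decomposition "BijGroup \<Omega>" M r Ms
  by (intro direct_decomposition.intro direct_decomposition_axioms.intro group_BijGroup dec)

context plinth_decomposition
begin

abbreviation Sym :: "('a \<Rightarrow> 'a) monoid" where "Sym \<equiv> BijGroup \<Omega>"

lemma subgroup_G: "subgroup G Sym"
  using innate unfolding innately_transitive_plinth_def by simp

lemma minimal_normal_M: "minimal_normal (Sym\<lparr>carrier := G\<rparr>) M"
  using innate unfolding innately_transitive_plinth_def by simp

lemma M_normal: "M \<lhd> Sym\<lparr>carrier := G\<rparr>"
  using minimal_normal_M unfolding minimal_normal_def by simp

lemma M_minimal: "L \<lhd> Sym\<lparr>carrier := G\<rparr> \<Longrightarrow> L \<subseteq> M \<Longrightarrow> L = {\<one>\<^bsub>Sym\<^esub>} \<or> L = M"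
  using minimal_normal_M unfolding minimal_normal_def by simp

lemma M_subset_G: "M \<subseteq> G"
  using subgroup.subset[OF normal_imp_subgroup[OF M_normal]] by simp

lemma M_transitive: "p \<in> \<Omega> \<Longrightarrow> q \<in> \<Omega> \<Longrightarrow> \<exists>m\<in>M. m p = q"
  using innate unfolding innately_transitive_plinth_def transitive_on_def by blast

lemma G_carrier: "g \<in> G \<Longrightarrow> g \<in> carrier Sym"
  using subgroup.mem_carrier[OF subgroup_G] .

lemma G_inv_closed: "g \<in> G \<Longrightarrow> inv\<^bsub>Sym\<^esub> g \<in> G"
  using subgroup.m_inv_closed[OF subgroup_G] .

lemma G_m_closed: "g \<in> G \<Longrightarrow> h \<in> G \<Longrightarrow> g \<otimes>\<^bsub>Sym\<^esub> h \<in> G"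
  using subgroup.m_closed[OF subgroup_G] .

lemma M_carrier: "m \<in> M \<Longrightarrow> m \<in> carrier Sym"
  using subgroup.mem_carrier[OF subgroup_M] .

lemma stabiliser_iff: "x \<in> stabiliser M \<omega> \<longleftrightarrow> x \<in> M \<and> x \<omega> = \<omega>"
  unfolding stabiliser_def by simp

lemma apply_mem: "f \<in> carrier Sym \<Longrightarrow> p \<in> \<Omega> \<Longrightarrow> f p \<in> \<Omega>"
  using BijGroup_apply_mem .

lemma mult_apply: "f \<in> carrier Sym \<Longrightarrow> g \<in> carrier Sym \<Longrightarrow> p \<in> \<Omega> \<Longrightarrow> (f \<otimes>\<^bsub>Sym\<^esub> g) p = f (g p)"
  using BijGroup_mult_apply .

definition conjugate :: "('a \<Rightarrow> 'a) \<Rightarrow> ('a \<Rightarrow> 'a) \<Rightarrow> ('a \<Rightarrow> 'a)" where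
  "conjugate g x = g \<otimes>\<^bsub>Sym\<^esub> x \<otimes>\<^bsub>Sym\<^esub> inv\<^bsub>Sym\<^esub> g"

definition factor_perm :: "('a \<Rightarrow> 'a) \<Rightarrow> nat \<Rightarrow> nat" where
  "factor_perm g i = (THE j. j < r \<and> conjugate g ` Ms i = Ms j)"

lemma conjugate_mult:
  "g \<in> carrier Sym \<Longrightarrow> h \<in> carrier Sym \<Longrightarrow> x \<in> carrier Sym \<Longrightarrow>
     conjugate (g \<otimes>\<^bsub>Sym\<^esub> h) x = conjugate g (conjugate h x)"
  unfolding conjugate_def by (simp add: inv_mult_group m_assoc)

lemma conjugate_apply:
  "g \<in> carrier Sym \<Longrightarrow> x \<in> carrier Sym \<Longrightarrow> p \<in> \<Omega> \<Longrightarrow> conjugate g x (g p) = g (x p)"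
  unfolding conjugate_def by (simp add: mult_apply apply_mem BijGroup_inv_apply)

lemma factor_perm:
  assumes g: "g \<in> G" and i: "i < r"
  shows "factor_perm g i < r" and "conjugate g ` Ms i = Ms (factor_perm g i)"
proof -
  have "\<exists>j<r. (\<lambda>x. inv\<^bsub>Sym\<^esub> (inv\<^bsub>Sym\<^esub> g) \<otimes>\<^bsub>Sym\<^esub> x \<otimes>\<^bsub>Sym\<^esub> inv\<^bsub>Sym\<^esub> g) ` Ms i = Ms j"
    using invariant G_inv_closed[OF g] i unfolding invariant_decomp_def by blast
  then obtain j where j: "j < r" "conjugate g ` Ms i = Ms j"
    using G_carrier[OF g] unfolding conjugate_def by auto
  have "\<exists>!j. j < r \<and> conjugate g ` Ms i = Ms j"
    using j distinct by (intro ex1I[of _ j]) (auto simp: inj_on_def)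
  then have "factor_perm g i < r \<and> conjugate g ` Ms i = Ms (factor_perm g i)"
    unfolding factor_perm_def by (rule theI')
  then show "factor_perm g i < r" "conjugate g ` Ms i = Ms (factor_perm g i)" by auto
qed

lemma factor_perm_eqI:
  assumes "g \<in> G" "i < r" "j < r" "conjugate g ` Ms i = Ms j"
  shows "factor_perm g i = j"
  using factor_perm[OF assms(1,2)] assms(3,4) distinct unfolding inj_on_def by auto

lemma conjugate_factor: "g \<in> G \<Longrightarrow> i < r \<Longrightarrow> x \<in> Ms i \<Longrightarrow> conjugate g x \<in> Ms (factor_perm g i)"
  using factor_perm(2) by blast

lemma factor_perm_mult:
  assumes g: "g \<in> G" and h: "h \<in> G" and i: "i < r"
  shows "factor_perm (g \<otimes>\<^bsub>Sym\<^esub> h) i = factor_perm g (factor_perm h i)"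
proof (rule factor_perm_eqI[OF G_m_closed[OF g h] i factor_perm(1)[OF g factor_perm(1)[OF h i]]])
  have "conjugate (g \<otimes>\<^bsub>Sym\<^esub> h) ` Ms i = conjugate g ` (conjugate h ` Ms i)"
    using conjugate_mult[OF G_carrier[OF g] G_carrier[OF h] factor_carrier[OF i]] by (auto simp: image_image)
  then show "conjugate (g \<otimes>\<^bsub>Sym\<^esub> h) ` Ms i = Ms (factor_perm g (factor_perm h i))"
    by (simp add: factor_perm(2)[OF h i] factor_perm(2)[OF g factor_perm(1)[OF h i]])
qed

lemma factor_perm_M:
  assumes m: "m \<in> M" and i: "i < r" shows "factor_perm m i = i"
proof (rule factor_perm_eqI[OF subsetD[OF M_subset_G m] i i])
  show "conjugate m ` Ms i = Ms i"
  proof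
    show "conjugate m ` Ms i \<subseteq> Ms i" using factor_conj[OF i m] unfolding conjugate_def by blast
    show "Ms i \<subseteq> conjugate m ` Ms i"
    proof
      fix x assume x: "x \<in> Ms i"
      have "conjugate (inv\<^bsub>Sym\<^esub> m) x \<in> Ms i"
        using factor_conj[OF i subgroup.m_inv_closed[OF subgroup_M m] x] M_carrier[OF m]
        unfolding conjugate_def by simp
      moreover have "x = conjugate m (conjugate (inv\<^bsub>Sym\<^esub> m) x)"
        using M_carrier[OF m] factor_carrier[OF i x] unfolding conjugate_def by (simp add: m_assoc)
      ultimately show "x \<in> conjugate m ` Ms i" by blast
    qed
  qed
qed

lemma factor_perm_inv:
  assumes g: "g \<in> G" and i: "i < r"
  shows "factor_perm (inv\<^bsub>Sym\<^esub> g) (factor_perm g i) = i"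
    and "factor_perm g (factor_perm (inv\<^bsub>Sym\<^esub> g) i) = i"
  using factor_perm_mult[OF G_inv_closed[OF g] g i] factor_perm_mult[OF g G_inv_closed[OF g] i]
    factor_perm_M[OF subgroup.one_closed[OF subgroup_M] i] G_carrier[OF g]
  by simp_all

lemma factor_perm_inj: "g \<in> G \<Longrightarrow> i < r \<Longrightarrow> j < r \<Longrightarrow> factor_perm g i = factor_perm g j \<Longrightarrow> i = j"
  by (metis factor_perm_inv(1))

lemma conjugate_complement:
  assumes g: "g \<in> G" and i: "i < r" and x: "x \<in> complement i"
  shows "conjugate g x \<in> complement (factor_perm g i)"
  unfolding conjugate_def complement_def
proof (rule conj_mem_generate[OF G_carrier[OF g]])
  show "(\<Union>j\<in>{0..<r} - {i}. Ms j) \<subseteq> carrier Sym" "(\<Union>j\<in>{0..<r} - {factor_perm g i}. Ms j) \<subseteq> carrier Sym"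
    using factor_carrier by auto
  show "x \<in> generate Sym (\<Union>j\<in>{0..<r} - {i}. Ms j)" using x unfolding complement_def .
  fix a assume "a \<in> (\<Union>j\<in>{0..<r} - {i}. Ms j)"
  then obtain j where "j \<in> {0..<r} - {i}" "a \<in> Ms j" by blast
  then have j: "j < r" "j \<noteq> i" "a \<in> Ms j" by auto
  then have "conjugate g a \<in> Ms (factor_perm g j)" "factor_perm g j \<noteq> factor_perm g i"
    using conjugate_factor[OF g] factor_perm_inj[OF g j(1) i] by auto
  then show "g \<otimes>\<^bsub>Sym\<^esub> a \<otimes>\<^bsub>Sym\<^esub> inv\<^bsub>Sym\<^esub> g \<in> (\<Union>j\<in>{0..<r} - {factor_perm g i}. Ms j)"
    using factor_perm(1)[OF g j(1)] unfolding conjugate_def by auto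
qed

lemma r_pos: "0 < r"
proof (rule ccontr)
  assume "\<not> 0 < r"
  then have "M = {\<one>\<^bsub>Sym\<^esub>}" using M_eq_generate generate_empty by simp
  then show False using minimal_normal_M unfolding minimal_normal_def by simp
qed

lemma generate_factors_normal:
  assumes I: "I \<subseteq> {0..<r}" and closed: "\<And>g j. g \<in> G \<Longrightarrow> j \<in> I \<Longrightarrow> factor_perm g j \<in> I"
  shows "generate Sym (\<Union>j\<in>I. Ms j) \<lhd> Sym\<lparr>carrier := G\<rparr>"
proof -
  have gens: "(\<Union>j\<in>I. Ms j) \<subseteq> M"
  proof (intro UN_least)
    fix j assume "j \<in> I"
    then have "j < r" using I by auto
    then show "Ms j \<subseteq> M" by (rule factor_subset)
  qed
  then have gens_carrier: "(\<Union>j\<in>I. Ms j) \<subseteq> carrier Sym"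
    using subgroup.subset[OF subgroup_M] by (rule subset_trans)
  show ?thesis
  proof (rule normal_in_subgroupI[OF subgroup_G])
    show "subgroup (generate Sym (\<Union>j\<in>I. Ms j)) Sym" by (rule generate_is_subgroup[OF gens_carrier])
    show "generate Sym (\<Union>j\<in>I. Ms j) \<subseteq> G"
      using generate_subgroup_incl[OF gens subgroup_M] M_subset_G by (rule subset_trans)
    fix x h assume x: "x \<in> G" and h: "h \<in> generate Sym (\<Union>j\<in>I. Ms j)"
    show "x \<otimes>\<^bsub>Sym\<^esub> h \<otimes>\<^bsub>Sym\<^esub> inv\<^bsub>Sym\<^esub> x \<in> generate Sym (\<Union>j\<in>I. Ms j)"
    proof (rule conj_mem_generate[OF G_carrier[OF x] gens_carrier gens_carrier _ h])
      fix a assume "a \<in> (\<Union>j\<in>I. Ms j)"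
      then obtain j where j: "j \<in> I" "a \<in> Ms j" by blast
      then have "conjugate x a \<in> Ms (factor_perm x j)" using I conjugate_factor[OF x] by auto
      then show "x \<otimes>\<^bsub>Sym\<^esub> a \<otimes>\<^bsub>Sym\<^esub> inv\<^bsub>Sym\<^esub> x \<in> (\<Union>j\<in>I. Ms j)"
        using closed[OF x j(1)] unfolding conjugate_def by blast
    qed
  qed
qed

text \<open>The factors in the \<open>G\<close>-orbit of \<open>Ms 0\<close> generate a nontrivial normal subgroup of \<open>G\<close> inside
  \<open>M\<close>, hence all of \<open>M\<close>; a factor outside the orbit would then lie in its own complement.\<close>
lemma factor_perm_transitive:
  assumes i: "i < r" shows "\<exists>g\<in>G. factor_perm g 0 = i"
proof (rule ccontr)
  assume nex: "\<not> (\<exists>g\<in>G. factor_perm g 0 = i)"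
  define orbit where "orbit = (\<lambda>g. factor_perm g 0) ` G"
  define P where "P = generate Sym (\<Union>j\<in>orbit. Ms j)"
  have orbit: "orbit \<subseteq> {0..<r} - {i}"
    unfolding orbit_def using factor_perm(1)[OF _ r_pos] nex by auto
  have "P \<lhd> Sym\<lparr>carrier := G\<rparr>"
    unfolding P_def
  proof (rule generate_factors_normal)
    show "orbit \<subseteq> {0..<r}" using orbit by auto
    fix g j assume g: "g \<in> G" and "j \<in> orbit"
    then obtain h where h: "h \<in> G" "j = factor_perm h 0" unfolding orbit_def by blast
    then show "factor_perm g j \<in> orbit"
      unfolding orbit_def using factor_perm_mult[OF g h(1) r_pos] G_m_closed[OF g h(1)] by force
  qed
  moreover have "P \<subseteq> M"
    unfolding P_def using orbit factor_subset by (intro generate_subgroup_incl[OF _ subgroup_M]) force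
  moreover have "P \<noteq> {\<one>\<^bsub>Sym\<^esub>}"
  proof
    have "factor_perm \<one>\<^bsub>Sym\<^esub> 0 = 0"
      using factor_perm_M[OF subgroup.one_closed[OF subgroup_M] r_pos] .
    then have "0 \<in> orbit" unfolding orbit_def using subgroup.one_closed[OF subgroup_G] by force
    then have "Ms 0 \<subseteq> P" unfolding P_def by (auto intro: generate.incl)
    moreover assume "P = {\<one>\<^bsub>Sym\<^esub>}"
    ultimately show False using nontriv r_pos subgroup.one_closed[OF subgroup_factor[OF r_pos]] by blast
  qed
  ultimately have "P = M" using M_minimal by blast
  moreover have "P \<subseteq> complement i"
    unfolding P_def complement_def using orbit by (intro mono_generate UN_mono) auto
  ultimately have "Ms i \<subseteq> complement i" using factor_subset[OF i] by simp
  then have "Ms i = {\<one>\<^bsub>Sym\<^esub>}" using factor_inter_complement[OF i] by blast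
  then show False using nontriv i by blast
qed

definition transversal :: "nat \<Rightarrow> ('a \<Rightarrow> 'a)" where
  "transversal i = (SOME t. t \<in> G \<and> factor_perm t i = 0)"

lemma transversal:
  assumes i: "i < r" shows "transversal i \<in> G" "factor_perm (transversal i) i = 0"
proof -
  obtain g where g: "g \<in> G" "factor_perm g 0 = i" using factor_perm_transitive[OF i] by blast
  then have "inv\<^bsub>Sym\<^esub> g \<in> G \<and> factor_perm (inv\<^bsub>Sym\<^esub> g) i = 0"
    using G_inv_closed factor_perm_inv(1)[OF g(1) r_pos] by simp
  then have "transversal i \<in> G \<and> factor_perm (transversal i) i = 0"
    unfolding transversal_def by (rule someI[of "\<lambda>t. t \<in> G \<and> factor_perm t i = 0"])
  then show "transversal i \<in> G" "factor_perm (transversal i) i = 0" by auto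
qed

subsection \<open>Coordinates of points\<close>

abbreviation K :: "('a \<Rightarrow> 'a) set" where "K \<equiv> Ms 0 \<inter> stabiliser M \<omega>"

definition Xi :: "('a \<Rightarrow> 'a) set set" where
  "Xi = rcosets\<^bsub>Sym\<lparr>carrier := Ms 0\<rparr>\<^esub> K"

lemma subgroup_stabiliser: "subgroup (stabiliser M \<omega>) Sym"
  using stabiliser_X_subgroup unfolding X_subgroup_def direct_decomp_def by blast

lemma subgroup_K: "subgroup K Sym"
  using subgroups_Inter_pair[OF subgroup_factor[OF r_pos] subgroup_stabiliser] .

lemma Xi_eq: "Xi = {K #>\<^bsub>Sym\<^esub> a | a. a \<in> Ms 0}"
  unfolding Xi_def RCOSETS_def r_coset_def by auto

lemma point_decomposition:
  assumes p: "p \<in> \<Omega>" shows "\<exists>a\<in>Ms 0. \<exists>b\<in>complement 0. p = (a \<otimes>\<^bsub>Sym\<^esub> b) \<omega>"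
proof -
  obtain m where m: "m \<in> M" "m \<omega> = p" using M_transitive[OF base_point p] by blast
  then show ?thesis using subsetD[OF M_subset_set_mult[OF r_pos] m(1)] unfolding in_set_mult_iff by blast
qed

lemma same_point_imp_same_coset:
  assumes a: "a \<in> Ms 0" "a' \<in> Ms 0" and b: "b \<in> complement 0" "b' \<in> complement 0"
    and e: "(a \<otimes>\<^bsub>Sym\<^esub> b) \<omega> = (a' \<otimes>\<^bsub>Sym\<^esub> b') \<omega>"
  shows "inv\<^bsub>Sym\<^esub> a' \<otimes>\<^bsub>Sym\<^esub> a \<in> K"
proof -
  have [simp]: "a \<in> carrier Sym" "a' \<in> carrier Sym" "b \<in> carrier Sym" "b' \<in> carrier Sym"
    using a b factor_carrier[OF r_pos] complement_carrier by auto
  let ?x = "inv\<^bsub>Sym\<^esub> (a' \<otimes>\<^bsub>Sym\<^esub> b') \<otimes>\<^bsub>Sym\<^esub> (a \<otimes>\<^bsub>Sym\<^esub> b)"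
  have "?x \<in> M"
    using a b factor_subset[OF r_pos] complement_subset subgroup.m_closed[OF subgroup_M]
      subgroup.m_inv_closed[OF subgroup_M] by (meson subsetD)
  moreover have "?x \<omega> = \<omega>"
  proof -
    have "?x \<omega> = (inv\<^bsub>Sym\<^esub> (a' \<otimes>\<^bsub>Sym\<^esub> b')) ((a' \<otimes>\<^bsub>Sym\<^esub> b') \<omega>)"
      using e base_point by (simp add: mult_apply apply_mem)
    then show ?thesis using BijGroup_inv_apply(1)[OF m_closed base_point] by simp
  qed
  ultimately have x_stab: "?x \<in> stabiliser M \<omega>" using stabiliser_iff by blast
  have a'a: "inv\<^bsub>Sym\<^esub> a' \<otimes>\<^bsub>Sym\<^esub> a \<in> Ms 0"
    using subgroup.m_closed[OF subgroup_factor[OF r_pos] subgroup.m_inv_closed[OF subgroup_factor[OF r_pos] a(2)] a(1)] .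
  have b'b: "inv\<^bsub>Sym\<^esub> b' \<otimes>\<^bsub>Sym\<^esub> b \<in> complement 0"
    using subgroup.m_closed[OF subgroup_complement subgroup.m_inv_closed[OF subgroup_complement b(2)] b(1)] .
  have "?x = inv\<^bsub>Sym\<^esub> b' \<otimes>\<^bsub>Sym\<^esub> (inv\<^bsub>Sym\<^esub> a' \<otimes>\<^bsub>Sym\<^esub> a) \<otimes>\<^bsub>Sym\<^esub> b"
    by (simp add: inv_mult_group m_assoc)
  also have "inv\<^bsub>Sym\<^esub> b' \<otimes>\<^bsub>Sym\<^esub> (inv\<^bsub>Sym\<^esub> a' \<otimes>\<^bsub>Sym\<^esub> a) = (inv\<^bsub>Sym\<^esub> a' \<otimes>\<^bsub>Sym\<^esub> a) \<otimes>\<^bsub>Sym\<^esub> inv\<^bsub>Sym\<^esub> b'"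
    using factor_complement_commute[OF r_pos a'a subgroup.m_inv_closed[OF subgroup_complement b(2)]] by simp
  also have "\<dots> \<otimes>\<^bsub>Sym\<^esub> b = (inv\<^bsub>Sym\<^esub> a' \<otimes>\<^bsub>Sym\<^esub> a) \<otimes>\<^bsub>Sym\<^esub> (inv\<^bsub>Sym\<^esub> b' \<otimes>\<^bsub>Sym\<^esub> b)"
    by (simp add: m_assoc)
  finally have "inv\<^bsub>Sym\<^esub> a' \<otimes>\<^bsub>Sym\<^esub> a \<in> stabiliser M \<omega>"
    using X_subgroup_factor_mem[OF stabiliser_X_subgroup r_pos a'a b'b] x_stab by simp
  then show ?thesis using a'a by blast
qed

text \<open>The point \<open>(a b)\<omega>\<close> determines the left coset \<open>a K\<close>; inversion turns it into an element of \<open>Xi\<close>,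
  which consists of right cosets.\<close>
definition base_coord :: "'a \<Rightarrow> ('a \<Rightarrow> 'a) set" where
  "base_coord p = (THE \<xi>. \<exists>a\<in>Ms 0. \<exists>b\<in>complement 0.
                     \<xi> = K #>\<^bsub>Sym\<^esub> inv\<^bsub>Sym\<^esub> a \<and> p = (a \<otimes>\<^bsub>Sym\<^esub> b) \<omega>)"

lemma base_coord_eq:
  assumes a: "a \<in> Ms 0" and b: "b \<in> complement 0"
  shows "base_coord ((a \<otimes>\<^bsub>Sym\<^esub> b) \<omega>) = K #>\<^bsub>Sym\<^esub> inv\<^bsub>Sym\<^esub> a"
  unfolding base_coord_def
proof (rule the_equality)
  fix \<xi> assume "\<exists>a'\<in>Ms 0. \<exists>b'\<in>complement 0.
    \<xi> = K #>\<^bsub>Sym\<^esub> inv\<^bsub>Sym\<^esub> a' \<and> (a \<otimes>\<^bsub>Sym\<^esub> b) \<omega> = (a' \<otimes>\<^bsub>Sym\<^esub> b') \<omega>"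
  then obtain a' b' where a': "a' \<in> Ms 0" and b': "b' \<in> complement 0"
    and \<xi>: "\<xi> = K #>\<^bsub>Sym\<^esub> inv\<^bsub>Sym\<^esub> a'" and e: "(a \<otimes>\<^bsub>Sym\<^esub> b) \<omega> = (a' \<otimes>\<^bsub>Sym\<^esub> b') \<omega>" by blast
  have "inv\<^bsub>Sym\<^esub> a' \<otimes>\<^bsub>Sym\<^esub> a \<in> K" using same_point_imp_same_coset[OF a a' b b' e] .
  then have "K #>\<^bsub>Sym\<^esub> inv\<^bsub>Sym\<^esub> a = K #>\<^bsub>Sym\<^esub> inv\<^bsub>Sym\<^esub> a'"
    using rcos_eq_iff[OF subgroup_K, of "inv\<^bsub>Sym\<^esub> a" "inv\<^bsub>Sym\<^esub> a'"] a a' factor_carrier[OF r_pos]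
    by simp
  then show "\<xi> = K #>\<^bsub>Sym\<^esub> inv\<^bsub>Sym\<^esub> a" using \<xi> by simp
qed (use a b in blast)

lemma base_coord_mem: assumes p: "p \<in> \<Omega>" shows "base_coord p \<in> Xi"
proof -
  obtain a b where "a \<in> Ms 0" "b \<in> complement 0" "p = (a \<otimes>\<^bsub>Sym\<^esub> b) \<omega>"
    using point_decomposition[OF p] by blast
  then show ?thesis
    unfolding Xi_eq using base_coord_eq subgroup.m_inv_closed[OF subgroup_factor[OF r_pos]] by blast
qed

lemma base_coord_complement:
  assumes p: "p \<in> \<Omega>" and n: "n \<in> complement 0"
  shows "base_coord (n p) = base_coord p"
proof -
  obtain a b where a: "a \<in> Ms 0" and b: "b \<in> complement 0" and p_eq: "p = (a \<otimes>\<^bsub>Sym\<^esub> b) \<omega>"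
    using point_decomposition[OF p] by blast
  have [simp]: "a \<in> carrier Sym" "b \<in> carrier Sym" "n \<in> carrier Sym"
    using a b n factor_carrier[OF r_pos] complement_carrier by auto
  have "inv\<^bsub>Sym\<^esub> a \<otimes>\<^bsub>Sym\<^esub> n \<otimes>\<^bsub>Sym\<^esub> a \<in> complement 0"
    using complement_conj[OF subgroup.m_inv_closed[OF subgroup_M subsetD[OF factor_subset[OF r_pos] a]] n]
    by simp
  then have b': "(inv\<^bsub>Sym\<^esub> a \<otimes>\<^bsub>Sym\<^esub> n \<otimes>\<^bsub>Sym\<^esub> a) \<otimes>\<^bsub>Sym\<^esub> b \<in> complement 0"
    using subgroup.m_closed[OF subgroup_complement _ b] by blast
  have "n p = (a \<otimes>\<^bsub>Sym\<^esub> ((inv\<^bsub>Sym\<^esub> a \<otimes>\<^bsub>Sym\<^esub> n \<otimes>\<^bsub>Sym\<^esub> a) \<otimes>\<^bsub>Sym\<^esub> b)) \<omega>"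
    unfolding p_eq using base_point by (simp add: mult_apply m_assoc)
  then show ?thesis using base_coord_eq[OF a b'] base_coord_eq[OF a b] p_eq by simp
qed

lemma base_coord_eqD:
  assumes p: "p \<in> \<Omega>" and q: "q \<in> \<Omega>" and e: "base_coord p = base_coord q"
  shows "\<exists>n\<in>complement 0. q = n p"
proof -
  obtain a b where a: "a \<in> Ms 0" and b: "b \<in> complement 0" and p_eq: "p = (a \<otimes>\<^bsub>Sym\<^esub> b) \<omega>"
    using point_decomposition[OF p] by blast
  obtain a' b' where a': "a' \<in> Ms 0" and b': "b' \<in> complement 0" and q_eq: "q = (a' \<otimes>\<^bsub>Sym\<^esub> b') \<omega>"
    using point_decomposition[OF q] by blast
  have [simp]: "a \<in> carrier Sym" "b \<in> carrier Sym" "a' \<in> carrier Sym" "b' \<in> carrier Sym"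
    using a b a' b' factor_carrier[OF r_pos] complement_carrier by auto
  have "K #>\<^bsub>Sym\<^esub> inv\<^bsub>Sym\<^esub> a = K #>\<^bsub>Sym\<^esub> inv\<^bsub>Sym\<^esub> a'"
    using e unfolding p_eq q_eq base_coord_eq[OF a b] base_coord_eq[OF a' b'] .
  then have k: "inv\<^bsub>Sym\<^esub> a \<otimes>\<^bsub>Sym\<^esub> a' \<in> K"
    using rcos_eq_iff[OF subgroup_K, of "inv\<^bsub>Sym\<^esub> a'" "inv\<^bsub>Sym\<^esub> a"] by simp
  define k where "k = inv\<^bsub>Sym\<^esub> a \<otimes>\<^bsub>Sym\<^esub> a'"
  have [simp]: "k \<in> carrier Sym" unfolding k_def by simp
  have a'_eq: "a' = a \<otimes>\<^bsub>Sym\<^esub> k" unfolding k_def by (simp add: m_assoc)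
  have "k \<omega> = \<omega>" using k stabiliser_iff unfolding k_def by blast
  moreover have "k \<otimes>\<^bsub>Sym\<^esub> b' = b' \<otimes>\<^bsub>Sym\<^esub> k" using factor_complement_commute[OF r_pos _ b'] k unfolding k_def by blast
  ultimately have q_eq': "q = (a \<otimes>\<^bsub>Sym\<^esub> b') \<omega>"
    unfolding q_eq a'_eq using base_point by (simp add: mult_apply m_assoc apply_mem)
  define n where "n = a \<otimes>\<^bsub>Sym\<^esub> (b' \<otimes>\<^bsub>Sym\<^esub> inv\<^bsub>Sym\<^esub> b) \<otimes>\<^bsub>Sym\<^esub> inv\<^bsub>Sym\<^esub> a"
  have "n \<in> complement 0"
    unfolding n_def using complement_conj[OF subsetD[OF factor_subset[OF r_pos] a]
        subgroup.m_closed[OF subgroup_complement b' subgroup.m_inv_closed[OF subgroup_complement b]]] .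
  moreover have "n \<otimes>\<^bsub>Sym\<^esub> (a \<otimes>\<^bsub>Sym\<^esub> b) = a \<otimes>\<^bsub>Sym\<^esub> b'" unfolding n_def by (simp add: m_assoc)
  then have "n p = q"
    unfolding p_eq q_eq' using base_point \<open>n \<in> complement 0\<close> complement_carrier
    by (metis mult_apply m_closed \<open>a \<in> carrier Sym\<close> \<open>b \<in> carrier Sym\<close>)
  ultimately show ?thesis by blast
qed

lemma base_coord_surj: assumes \<xi>: "\<xi> \<in> Xi" shows "\<exists>p\<in>\<Omega>. base_coord p = \<xi>"
proof -
  obtain a where a: "a \<in> Ms 0" "\<xi> = K #>\<^bsub>Sym\<^esub> a" using \<xi> unfolding Xi_eq by blast
  have a_inv: "inv\<^bsub>Sym\<^esub> a \<in> Ms 0" using subgroup.m_inv_closed[OF subgroup_factor[OF r_pos] a(1)] .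
  have "base_coord ((inv\<^bsub>Sym\<^esub> a \<otimes>\<^bsub>Sym\<^esub> \<one>\<^bsub>Sym\<^esub>) \<omega>) = \<xi>"
    using base_coord_eq[OF a_inv subgroup.one_closed[OF subgroup_complement]] a factor_carrier[OF r_pos]
    by simp
  moreover have "(inv\<^bsub>Sym\<^esub> a \<otimes>\<^bsub>Sym\<^esub> \<one>\<^bsub>Sym\<^esub>) \<omega> \<in> \<Omega>"
    using apply_mem[OF _ base_point] factor_carrier[OF r_pos a_inv] by simp
  ultimately show ?thesis by blast
qed

definition coord :: "nat \<Rightarrow> 'a \<Rightarrow> ('a \<Rightarrow> 'a) set" where
  "coord i p = base_coord (transversal i p)"

lemma transversal_carrier: "i < r \<Longrightarrow> transversal i \<in> carrier Sym"
  using G_carrier transversal(1) by blast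

lemma coord_mem: "i < r \<Longrightarrow> p \<in> \<Omega> \<Longrightarrow> coord i p \<in> Xi"
  unfolding coord_def using base_coord_mem apply_mem transversal_carrier by blast

lemma coord_complement:
  assumes i: "i < r" and p: "p \<in> \<Omega>" and n: "n \<in> complement i"
  shows "coord i (n p) = coord i p"
proof -
  have "conjugate (transversal i) n \<in> complement 0"
    using conjugate_complement[OF transversal(1)[OF i] i n] transversal(2)[OF i] by simp
  moreover have "transversal i (n p) = conjugate (transversal i) n (transversal i p)"
    using conjugate_apply transversal_carrier[OF i] complement_carrier[OF n] p by simp
  ultimately show ?thesis
    unfolding coord_def using base_coord_complement apply_mem transversal_carrier[OF i] p by simp
qed

lemma coord_eqD:
  assumes i: "i < r" and p: "p \<in> \<Omega>" and q: "q \<in> \<Omega>" and e: "coord i p = coord i q"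
  shows "\<exists>n\<in>complement i. q = n p"
proof -
  let ?t = "transversal i"
  have t: "?t \<in> G" "?t \<in> carrier Sym" using transversal(1)[OF i] transversal_carrier[OF i] by auto
  obtain n where n: "n \<in> complement 0" "?t q = n (?t p)"
    using base_coord_eqD[OF apply_mem[OF t(2) p] apply_mem[OF t(2) q]] e unfolding coord_def by blast
  have "conjugate (inv\<^bsub>Sym\<^esub> ?t) n \<in> complement i"
    using conjugate_complement[OF G_inv_closed[OF t(1)] r_pos n(1)]
      factor_perm_inv(1)[OF t(1) i] transversal(2)[OF i] by simp
  moreover have "q = conjugate (inv\<^bsub>Sym\<^esub> ?t) n p"
  proof -
    have "q = (inv\<^bsub>Sym\<^esub> ?t) (?t q)" using BijGroup_inv_apply t(2) q by metis
    also have "\<dots> = (inv\<^bsub>Sym\<^esub> ?t) (n (?t p))" using n(2) by simp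
    also have "\<dots> = conjugate (inv\<^bsub>Sym\<^esub> ?t) n ((inv\<^bsub>Sym\<^esub> ?t) (?t p))"
      using conjugate_apply[of "inv\<^bsub>Sym\<^esub> ?t" n "?t p"] t(2) complement_carrier[OF n(1)] apply_mem[OF t(2) p]
      by simp
    also have "\<dots> = conjugate (inv\<^bsub>Sym\<^esub> ?t) n p" using BijGroup_inv_apply t(2) p by metis
    finally show ?thesis .
  qed
  ultimately show ?thesis by blast
qed

lemma coord_surj:
  assumes i: "i < r" and \<xi>: "\<xi> \<in> Xi" shows "\<exists>p\<in>\<Omega>. coord i p = \<xi>"
proof -
  obtain p where p: "p \<in> \<Omega>" "base_coord p = \<xi>" using base_coord_surj[OF \<xi>] by blast
  have t: "transversal i \<in> carrier Sym" using transversal_carrier[OF i] .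
  have "coord i ((inv\<^bsub>Sym\<^esub> (transversal i)) p) = \<xi>"
    unfolding coord_def using BijGroup_inv_apply(2)[OF t p(1)] p(2) by simp
  moreover have "(inv\<^bsub>Sym\<^esub> (transversal i)) p \<in> \<Omega>" using apply_mem[OF _ p(1)] t by simp
  ultimately show ?thesis by blast
qed

definition coord_point :: "nat \<Rightarrow> ('a \<Rightarrow> 'a) set \<Rightarrow> 'a" where
  "coord_point i \<xi> = (SOME p. p \<in> \<Omega> \<and> coord i p = \<xi>)"

lemma coord_point:
  assumes "i < r" "\<xi> \<in> Xi" shows "coord_point i \<xi> \<in> \<Omega>" "coord i (coord_point i \<xi>) = \<xi>"
proof -
  have "\<exists>p. p \<in> \<Omega> \<and> coord i p = \<xi>" using coord_surj[OF assms] by blast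
  then have "coord_point i \<xi> \<in> \<Omega> \<and> coord i (coord_point i \<xi>) = \<xi>" unfolding coord_point_def by (rule someI_ex)
  then show "coord_point i \<xi> \<in> \<Omega>" "coord i (coord_point i \<xi>) = \<xi>" by auto
qed

lemma coord_apply_cong:
  assumes g: "g \<in> G" and j: "j < r" and p: "p \<in> \<Omega>" and q: "q \<in> \<Omega>" and e: "coord j p = coord j q"
  shows "coord (factor_perm g j) (g p) = coord (factor_perm g j) (g q)"
proof -
  obtain n where n: "n \<in> complement j" "q = n p" using coord_eqD[OF j p q e] by blast
  have "g q = conjugate g n (g p)" using conjugate_apply G_carrier[OF g] complement_carrier[OF n(1)] p n(2) by simp
  moreover have "conjugate g n \<in> complement (factor_perm g j)" using conjugate_complement[OF g j n(1)] .
  ultimately show ?thesis using coord_complement[OF factor_perm(1)[OF g j] apply_mem[OF G_carrier[OF g] p]] by simp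
qed

text \<open>Equal \<open>i\<close>-th coordinates of \<open>m \<omega>\<close> and \<open>m' \<omega>\<close> force the \<open>Ms i\<close>-component of \<open>m\<^sup>-\<^sup>1 m'\<close> into the
  stabiliser; since the stabiliser is an \<open>Ms\<close>-subgroup, all coordinates together determine the point.\<close>
lemma same_coord_imp_component:
  assumes i: "i < r" and m: "m \<in> M" "m' \<in> M" and e: "coord i (m \<omega>) = coord i (m' \<omega>)"
  shows "inv\<^bsub>Sym\<^esub> m \<otimes>\<^bsub>Sym\<^esub> m' \<in> (stabiliser M \<omega> \<inter> Ms i) <#>\<^bsub>Sym\<^esub> complement i"
proof -
  have [simp]: "m \<in> carrier Sym" "m' \<in> carrier Sym" using m M_carrier by auto
  obtain n where n: "n \<in> complement i" "m' \<omega> = n (m \<omega>)"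
    using coord_eqD[OF i apply_mem[of m, OF _ base_point] apply_mem[of m', OF _ base_point] e] by auto
  have [simp]: "n \<in> carrier Sym" using complement_carrier[OF n(1)] .
  define y where "y = inv\<^bsub>Sym\<^esub> (n \<otimes>\<^bsub>Sym\<^esub> m) \<otimes>\<^bsub>Sym\<^esub> m'"
  have "y \<in> M"
    unfolding y_def using m subsetD[OF complement_subset n(1)]
      subgroup.m_closed[OF subgroup_M] subgroup.m_inv_closed[OF subgroup_M] by blast
  moreover have "y \<omega> = \<omega>"
    unfolding y_def using n(2) base_point BijGroup_inv_apply(1)[OF m_closed base_point]
    by (simp add: mult_apply apply_mem)
  ultimately obtain k l where k: "k \<in> stabiliser M \<omega> \<inter> Ms i" and l: "l \<in> complement i"
    and y: "y = k \<otimes>\<^bsub>Sym\<^esub> l"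
    using subsetD[OF X_subgroup_subset_set_mult[OF stabiliser_X_subgroup i]] stabiliser_iff
    unfolding in_set_mult_iff by blast
  define n' where "n' = inv\<^bsub>Sym\<^esub> m \<otimes>\<^bsub>Sym\<^esub> n \<otimes>\<^bsub>Sym\<^esub> m"
  have n': "n' \<in> complement i"
    unfolding n'_def using complement_conj[OF subgroup.m_inv_closed[OF subgroup_M m(1)] n(1)] by simp
  have [simp]: "k \<in> carrier Sym" "l \<in> carrier Sym" "n' \<in> carrier Sym"
    using factor_carrier[OF i] k complement_carrier l n' by auto
  have "inv\<^bsub>Sym\<^esub> m \<otimes>\<^bsub>Sym\<^esub> m' = n' \<otimes>\<^bsub>Sym\<^esub> y"
    unfolding n'_def y_def by (simp add: m_assoc inv_mult_group)
  also have "\<dots> = n' \<otimes>\<^bsub>Sym\<^esub> k \<otimes>\<^bsub>Sym\<^esub> l" unfolding y by (simp add: m_assoc)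
  also have "n' \<otimes>\<^bsub>Sym\<^esub> k = k \<otimes>\<^bsub>Sym\<^esub> n'" using factor_complement_commute[OF i _ n'] k by simp
  finally have "inv\<^bsub>Sym\<^esub> m \<otimes>\<^bsub>Sym\<^esub> m' = k \<otimes>\<^bsub>Sym\<^esub> (n' \<otimes>\<^bsub>Sym\<^esub> l)" by (simp add: m_assoc)
  then show ?thesis
    unfolding in_set_mult_iff using k subgroup.m_closed[OF subgroup_complement n' l] by blast
qed

lemma coord_inj:
  assumes p: "p \<in> \<Omega>" and q: "q \<in> \<Omega>" and e: "\<And>i. i < r \<Longrightarrow> coord i p = coord i q"
  shows "p = q"
proof -
  obtain m m' where m: "m \<in> M" "m \<omega> = p" and m': "m' \<in> M" "m' \<omega> = q"
    using M_transitive[OF base_point p] M_transitive[OF base_point q] by blast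
  have [simp]: "m \<in> carrier Sym" "m' \<in> carrier Sym" using m m' M_carrier by auto
  have "inv\<^bsub>Sym\<^esub> m \<otimes>\<^bsub>Sym\<^esub> m' \<in> stabiliser M \<omega>"
  proof (rule mem_subgroup_of_components[OF subgroup_stabiliser])
    show "inv\<^bsub>Sym\<^esub> m \<otimes>\<^bsub>Sym\<^esub> m' \<in> M"
      using subgroup.m_closed[OF subgroup_M subgroup.m_inv_closed[OF subgroup_M m(1)] m'(1)] .
    show "inv\<^bsub>Sym\<^esub> m \<otimes>\<^bsub>Sym\<^esub> m' \<in> (stabiliser M \<omega> \<inter> Ms i) <#>\<^bsub>Sym\<^esub> complement i" if "i < r" for i
      using same_coord_imp_component[OF that m(1) m'(1)] e[OF that] m(2) m'(2) by simp
  qed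
  then have "(inv\<^bsub>Sym\<^esub> m \<otimes>\<^bsub>Sym\<^esub> m') \<omega> = \<omega>" using stabiliser_iff by blast
  then have "m' \<omega> = m \<omega>"
    using BijGroup_inv_apply(2)[of m \<Omega> "m' \<omega>"] apply_mem[OF _ base_point] base_point
    by (simp add: mult_apply apply_mem)
  then show ?thesis using m(2) m'(2) by simp
qed

lemma coord_simultaneous_surj:
  assumes \<xi>: "\<And>i. i < r \<Longrightarrow> \<xi> i \<in> Xi"
  shows "\<exists>p\<in>\<Omega>. \<forall>i<r. coord i p = \<xi> i"
proof -
  have "n \<le> r \<Longrightarrow> \<exists>p\<in>\<Omega>. \<forall>i<n. coord i p = \<xi> i" for n
  proof (induction n)
    case 0
    then show ?case using base_point by blast
  next
    case (Suc n)
    have n: "n < r" using Suc.prems by simp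
    obtain p where p: "p \<in> \<Omega>" "\<forall>i<n. coord i p = \<xi> i" using Suc.IH Suc.prems by auto
    obtain q where q: "q \<in> \<Omega>" "coord n q = \<xi> n" using coord_surj[OF n \<xi>[OF n]] by blast
    obtain m where m: "m \<in> M" "m p = q" using M_transitive[OF p(1) q(1)] by blast
    obtain a b where a: "a \<in> Ms n" and b: "b \<in> complement n" and m_eq: "m = b \<otimes>\<^bsub>Sym\<^esub> a"
      using subsetD[OF M_subset_set_mult[OF n] m(1)] factor_complement_commute[OF n]
      unfolding in_set_mult_iff by metis
    have [simp]: "a \<in> carrier Sym" "b \<in> carrier Sym" using factor_carrier[OF n a] complement_carrier[OF b] by auto
    have ap: "a p \<in> \<Omega>" using apply_mem[OF _ p(1)] by simp
    have "coord n (a p) = \<xi> n"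
      using coord_complement[OF n ap b] q(2) m(2) p(1) unfolding m_eq by (simp add: mult_apply)
    moreover have "coord i (a p) = \<xi> i" if i: "i < n" for i
      using coord_complement[of i p a] i n p factor_subset_complement[of n i] a by auto
    ultimately have "\<forall>i<Suc n. coord i (a p) = \<xi> i" using less_Suc_eq by auto
    then show ?case using ap by blast
  qed
  then show ?thesis by simp
qed

subsection \<open>The embedding into the wreath product\<close>

definition component :: "('a \<Rightarrow> 'a) \<Rightarrow> nat \<Rightarrow> ('a \<Rightarrow> 'a) set \<Rightarrow> ('a \<Rightarrow> 'a) set" where
  "component g k = (\<lambda>\<xi>\<in>Xi. coord (factor_perm g k) (g (coord_point k \<xi>)))"

definition alpha :: "('a \<Rightarrow> 'a) \<Rightarrow> ('a \<Rightarrow> 'a) set wr_elt" where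
  "alpha g = ((\<lambda>k\<in>{0..<r}. component g k), (\<lambda>k\<in>{0..<r}. factor_perm g k))"

definition coords :: "'a \<Rightarrow> nat \<Rightarrow> ('a \<Rightarrow> 'a) set" where
  "coords p = (\<lambda>i\<in>{0..<r}. coord i p)"

abbreviation W :: "('a \<Rightarrow> 'a) set wr_elt monoid" where "W \<equiv> wreath Xi r"

lemma component_coord:
  assumes g: "g \<in> G" and k: "k < r" and p: "p \<in> \<Omega>"
  shows "component g k (coord k p) = coord (factor_perm g k) (g p)"
  unfolding component_def
  using coord_mem[OF k p] coord_apply_cong[OF g k coord_point(1)[OF k coord_mem[OF k p]] p]
    coord_point(2)[OF k coord_mem[OF k p]] by simp

lemma component_Bij:
  assumes g: "g \<in> G" and k: "k < r" shows "component g k \<in> Bij Xi"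
proof -
  have gc: "g \<in> carrier Sym" using G_carrier[OF g] .
  have gk: "factor_perm g k < r" using factor_perm(1)[OF g k] .
  have inj: "inj_on (component g k) Xi"
  proof (rule inj_onI)
    fix \<xi> \<eta> assume \<xi>: "\<xi> \<in> Xi" and \<eta>: "\<eta> \<in> Xi" and e: "component g k \<xi> = component g k \<eta>"
    let ?p = "coord_point k \<xi>" and ?q = "coord_point k \<eta>"
    have pq: "?p \<in> \<Omega>" "?q \<in> \<Omega>" using coord_point(1)[OF k \<xi>] coord_point(1)[OF k \<eta>] .
    have "coord (factor_perm g k) (g ?p) = coord (factor_perm g k) (g ?q)"
      using e \<xi> \<eta> unfolding component_def by simp
    then have "coord (factor_perm (inv\<^bsub>Sym\<^esub> g) (factor_perm g k)) ((inv\<^bsub>Sym\<^esub> g) (g ?p))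
             = coord (factor_perm (inv\<^bsub>Sym\<^esub> g) (factor_perm g k)) ((inv\<^bsub>Sym\<^esub> g) (g ?q))"
      using coord_apply_cong[OF G_inv_closed[OF g] gk apply_mem[OF gc pq(1)] apply_mem[OF gc pq(2)]] by blast
    then have "coord k ?p = coord k ?q" using factor_perm_inv(1)[OF g k] BijGroup_inv_apply(1)[OF gc] pq by simp
    then show "\<xi> = \<eta>" using coord_point(2)[OF k \<xi>] coord_point(2)[OF k \<eta>] by simp
  qed
  have "component g k ` Xi = Xi"
  proof
    show "component g k ` Xi \<subseteq> Xi"
      unfolding component_def using coord_mem[OF gk apply_mem[OF gc coord_point(1)[OF k]]] by auto
    show "Xi \<subseteq> component g k ` Xi"
    proof
      fix \<eta> assume \<eta>: "\<eta> \<in> Xi"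
      let ?q = "coord_point (factor_perm g k) \<eta>"
      let ?p = "(inv\<^bsub>Sym\<^esub> g) ?q"
      have q: "?q \<in> \<Omega>" "coord (factor_perm g k) ?q = \<eta>" using coord_point[OF gk \<eta>] by auto
      have p: "?p \<in> \<Omega>" using apply_mem[OF _ q(1)] gc by simp
      have "component g k (coord k ?p) = \<eta>"
        using component_coord[OF g k p] BijGroup_inv_apply(2)[OF gc q(1)] q(2) by simp
      then show "\<eta> \<in> component g k ` Xi" using coord_mem[OF k p] by blast
    qed
  qed
  then show ?thesis unfolding Bij_def bij_betw_def component_def using inj by (simp add: component_def)
qed

lemma factor_perm_Bij: assumes g: "g \<in> G" shows "(\<lambda>k\<in>{0..<r}. factor_perm g k) \<in> Bij {0..<r}"
proof -
  have "inj_on (\<lambda>k\<in>{0..<r}. factor_perm g k) {0..<r}"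
    by (rule inj_onI) (use factor_perm_inj[OF g] in simp)
  moreover have "(\<lambda>k\<in>{0..<r}. factor_perm g k) ` {0..<r} = {0..<r}"
  proof
    show "(\<lambda>k\<in>{0..<r}. factor_perm g k) ` {0..<r} \<subseteq> {0..<r}" using factor_perm(1)[OF g] by auto
    show "{0..<r} \<subseteq> (\<lambda>k\<in>{0..<r}. factor_perm g k) ` {0..<r}"
    proof
      fix k assume "k \<in> {0..<r}"
      then have "factor_perm (inv\<^bsub>Sym\<^esub> g) k \<in> {0..<r}" "factor_perm g (factor_perm (inv\<^bsub>Sym\<^esub> g) k) = k"
        using factor_perm(1)[OF G_inv_closed[OF g]] factor_perm_inv(2)[OF g] by auto
      then show "k \<in> (\<lambda>k\<in>{0..<r}. factor_perm g k) ` {0..<r}" by force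
    qed
  qed
  ultimately show ?thesis unfolding Bij_def bij_betw_def by simp
qed

lemma alpha_carrier: "g \<in> G \<Longrightarrow> alpha g \<in> carrier W"
  unfolding alpha_def wreath_carrier_iff using component_Bij factor_perm_Bij by auto

lemma alpha_mult:
  assumes g: "g \<in> G" and h: "h \<in> G"
  shows "alpha (g \<otimes>\<^bsub>Sym\<^esub> h) = alpha g \<otimes>\<^bsub>W\<^esub> alpha h"
proof -
  have gc: "g \<in> carrier Sym" and hc: "h \<in> carrier Sym" using G_carrier g h by auto
  have "component (g \<otimes>\<^bsub>Sym\<^esub> h) k = compose Xi (component g (factor_perm h k)) (component h k)"
    if k: "k < r" for k
    unfolding compose_def component_def[of "g \<otimes>\<^bsub>Sym\<^esub> h" k]
  proof (rule restrict_ext)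
    fix \<xi> assume \<xi>: "\<xi> \<in> Xi"
    let ?p = "coord_point k \<xi>"
    have p: "?p \<in> \<Omega>" using coord_point(1)[OF k \<xi>] .
    have "component g (factor_perm h k) (component h k \<xi>) = coord (factor_perm g (factor_perm h k)) (g (h ?p))"
      using component_coord[OF g factor_perm(1)[OF h k] apply_mem[OF hc p]] \<xi> by (simp add: component_def)
    then show "coord (factor_perm (g \<otimes>\<^bsub>Sym\<^esub> h) k) ((g \<otimes>\<^bsub>Sym\<^esub> h) ?p)
        = component g (factor_perm h k) (component h k \<xi>)"
      using factor_perm_mult[OF g h k] mult_apply[OF gc hc p] by simp
  qed
  then have "(\<lambda>k\<in>{0..<r}. component (g \<otimes>\<^bsub>Sym\<^esub> h) k)
      = (\<lambda>k\<in>{0..<r}. compose Xi ((\<lambda>k\<in>{0..<r}. component g k) ((\<lambda>k\<in>{0..<r}. factor_perm h k) k))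
                                 ((\<lambda>k\<in>{0..<r}. component h k) k))"
    using factor_perm(1)[OF h] by (intro restrict_ext) simp
  moreover have "(\<lambda>k\<in>{0..<r}. factor_perm (g \<otimes>\<^bsub>Sym\<^esub> h) k)
      = compose {0..<r} (\<lambda>k\<in>{0..<r}. factor_perm g k) (\<lambda>k\<in>{0..<r}. factor_perm h k)"
    unfolding compose_def using factor_perm_mult[OF g h] factor_perm(1)[OF h] by (intro restrict_ext) simp
  ultimately show ?thesis unfolding alpha_def wreath_mult_eq by simp
qed

lemma alpha_hom: assumes "H \<subseteq> G" shows "alpha \<in> hom (Sym\<lparr>carrier := H\<rparr>) W"
  using assms alpha_carrier alpha_mult by (intro homI) (auto simp: subset_iff)

lemma group_hom_alpha: "subgroup H Sym \<Longrightarrow> H \<subseteq> G \<Longrightarrow> group_hom (Sym\<lparr>carrier := H\<rparr>) W alpha"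
  unfolding group_hom_def group_hom_axioms_def
  using subgroup_imp_group group_wreath alpha_hom by blast

lemma prod_act_alpha:
  assumes g: "g \<in> G" and p: "p \<in> \<Omega>"
  shows "prod_act Xi r (alpha g) (coords p) = coords (g p)"
  unfolding prod_act_def coords_def
proof (rule restrict_ext)
  fix i assume i: "i \<in> {0..<r}"
  have b: "bij_betw (snd (alpha g)) {0..<r} {0..<r}"
    using factor_perm_Bij[OF g] unfolding alpha_def Bij_def by simp
  define j where "j = inv_into {0..<r} (snd (alpha g)) i"
  have j: "j \<in> {0..<r}" "factor_perm g j = i"
    using bij_betw_inv_into_right[OF b i] bij_betwE[OF bij_betw_inv_into[OF b]] i
    unfolding j_def alpha_def by auto
  have "fst (alpha g) j ((\<lambda>i\<in>{0..<r}. coord i p) j) = coord i (g p)"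
    using component_coord[OF g _ p] j unfolding alpha_def by simp
  then show "fst (alpha g) (inv_into {0..<r} (snd (alpha g)) i)
          ((\<lambda>i\<in>{0..<r}. coord i p) (inv_into {0..<r} (snd (alpha g)) i)) = coord i (g p)"
    unfolding j_def .
qed

lemma coords_surj: assumes x: "x \<in> prod_points Xi r" shows "\<exists>p\<in>\<Omega>. coords p = x"
proof -
  have "\<And>i. i < r \<Longrightarrow> x i \<in> Xi" using x unfolding prod_points_def by auto
  then obtain p where p: "p \<in> \<Omega>" "\<forall>i<r. coord i p = x i"
    using coord_simultaneous_surj by blast
  have "coords p = x"
    unfolding coords_def
  proof (rule extensionalityI[of _ "{0..<r}"])
    show "x \<in> extensional {0..<r}" using x unfolding prod_points_def by (simp add: PiE_iff)
  qed (use p(2) in auto)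
  then show ?thesis using p by blast
qed

lemma alpha_inj: "inj_on alpha G"
proof (rule inj_onI)
  fix g h assume g: "g \<in> G" and h: "h \<in> G" and e: "alpha g = alpha h"
  show "g = h"
  proof (rule BijGroup_eqI[OF G_carrier[OF g] G_carrier[OF h]])
    fix p assume p: "p \<in> \<Omega>"
    have e': "coords (g p) = coords (h p)" using prod_act_alpha[OF g p] prod_act_alpha[OF h p] e by simp
    have "coord i (g p) = coord i (h p)" if "i < r" for i
      using fun_cong[OF e', of i] that unfolding coords_def by simp
    then show "g p = h p" using coord_inj apply_mem G_carrier g h p by blast
  qed
qed

lemma alpha_M_snd: "m \<in> M \<Longrightarrow> snd (alpha m) = (\<lambda>k\<in>{0..<r}. k)"
  unfolding alpha_def by (auto intro!: restrict_ext simp: factor_perm_M)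

lemma alpha_factor_fst:
  assumes j: "j < r" and m: "m \<in> Ms j" and k: "k < r" and kj: "k \<noteq> j"
  shows "fst (alpha m) k = (\<lambda>\<xi>\<in>Xi. \<xi>)"
proof -
  have mM: "m \<in> M" using factor_subset[OF j] m by blast
  have mN: "m \<in> complement k" using factor_subset_complement[OF j kj[symmetric]] m by blast
  have "component m k = (\<lambda>\<xi>\<in>Xi. \<xi>)"
    unfolding component_def
    using factor_perm_M[OF mM k] coord_complement[OF k coord_point(1)[OF k] mN] coord_point(2)[OF k]
    by (intro restrict_ext) simp
  then show ?thesis unfolding alpha_def using k by simp
qed

lemma alpha_factor_eq_one:
  assumes j: "j < r" and m: "m \<in> Ms j" and f: "fst (alpha m) j = (\<lambda>\<xi>\<in>Xi. \<xi>)"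
  shows "alpha m = \<one>\<^bsub>W\<^esub>"
proof -
  have "fst (alpha m) = (\<lambda>k\<in>{0..<r}. (\<lambda>\<xi>\<in>Xi. \<xi>))"
  proof (rule extensionalityI[of _ "{0..<r}"])
    show "fst (alpha m) \<in> extensional {0..<r}" unfolding alpha_def by simp
    fix k assume "k \<in> {0..<r}"
    then show "fst (alpha m) k = (\<lambda>k\<in>{0..<r}. (\<lambda>\<xi>\<in>Xi. \<xi>)) k"
      using f alpha_factor_fst[OF j m] by (cases "k = j") auto
  qed simp
  then show ?thesis
    using alpha_M_snd[OF subsetD[OF factor_subset[OF j] m]] unfolding wreath_one_eq by (simp add: prod_eq_iff)
qed

lemma M_centre_trivial:
  assumes m: "m \<in> M" and central: "\<And>y. y \<in> M \<Longrightarrow> m \<otimes>\<^bsub>Sym\<^esub> y = y \<otimes>\<^bsub>Sym\<^esub> m"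
  shows "m = \<one>\<^bsub>Sym\<^esub>"
proof -
  have "nonabelian_set (Sym\<lparr>carrier := G\<rparr>) M" using nonab unfolding nonabelian_set_def by simp
  then have "group.centre (Sym\<lparr>carrier := G\<rparr>) M = {\<one>\<^bsub>Sym\<^esub>}"
    using group.centre_of_minimal_normal_nonabelian[OF subgroup_imp_group[OF subgroup_G] minimal_normal_M]
    by simp
  then show ?thesis
    using m central group.centre_def[OF subgroup_imp_group[OF subgroup_G]] by auto
qed

lemma subgroup_alpha_image: "subgroup H Sym \<Longrightarrow> H \<subseteq> G \<Longrightarrow> subgroup (alpha ` H) W"
  using group_hom.img_is_subgroup[OF group_hom_alpha] by simp

lemma alpha_factor_normal: "j < r \<Longrightarrow> alpha ` Ms j \<lhd> W\<lparr>carrier := alpha ` M\<rparr>"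
  using group_hom.normal_image[OF group_hom_alpha[OF subgroup_M M_subset_G] factor_normal] by simp

lemma alpha_M_centre_trivial:
  assumes x: "x \<in> alpha ` M"
    and central: "\<And>j y. j < r \<Longrightarrow> y \<in> alpha ` Ms j \<Longrightarrow> x \<otimes>\<^bsub>W\<^esub> y = y \<otimes>\<^bsub>W\<^esub> x"
  shows "x = \<one>\<^bsub>W\<^esub>"
proof -
  obtain m where m: "m \<in> M" "x = alpha m" using x by blast
  have "m \<otimes>\<^bsub>Sym\<^esub> y = y \<otimes>\<^bsub>Sym\<^esub> m" if j: "j < r" and y: "y \<in> Ms j" for j y
  proof -
    have mG: "m \<in> G" and yG: "y \<in> G" using m(1) factor_subset[OF j] y M_subset_G by auto
    have "alpha (m \<otimes>\<^bsub>Sym\<^esub> y) = alpha (y \<otimes>\<^bsub>Sym\<^esub> m)"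
      using central[OF j] y m(2) alpha_mult[OF mG yG] alpha_mult[OF yG mG] by simp
    then show ?thesis using alpha_inj G_m_closed[OF mG yG] G_m_closed[OF yG mG] unfolding inj_on_def by blast
  qed
  then have "m = \<one>\<^bsub>Sym\<^esub>" using M_centre_trivial[OF m(1)] commute_with_M[OF M_carrier[OF m(1)]] by blast
  then show ?thesis
    using m(2) group_hom.hom_one[OF group_hom_alpha[OF subgroup_G subset_refl]] by simp
qed

lemma simple_direct_factor_subset_factor:
  assumes T: "simple_direct_factor W (alpha ` M) T"
  shows "\<exists>j<r. T \<subseteq> alpha ` Ms j"
proof -
  have T_normal: "T \<lhd> W\<lparr>carrier := alpha ` M\<rparr>" and T_simple: "simple_group (W\<lparr>carrier := T\<rparr>)"
    using T unfolding simple_direct_factor_def by auto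
  have "\<exists>j\<in>{..<r}. T \<subseteq> alpha ` Ms j"
  proof (rule group.simple_normal_subset_member[OF group_wreath
        subgroup_alpha_image[OF subgroup_M M_subset_G] T_normal T_simple])
    show "alpha ` Ms j \<lhd> W\<lparr>carrier := alpha ` M\<rparr>" if "j \<in> {..<r}" for j
      using alpha_factor_normal that by simp
    show "x = \<one>\<^bsub>W\<^esub>"
      if "x \<in> alpha ` M" "\<And>j y. j \<in> {..<r} \<Longrightarrow> y \<in> alpha ` Ms j \<Longrightarrow> x \<otimes>\<^bsub>W\<^esub> y = y \<otimes>\<^bsub>W\<^esub> x" for x
      using alpha_M_centre_trivial that by simp
  qed
  then show ?thesis by auto
qed

lemma simple_direct_factor_component:
  assumes T: "simple_direct_factor W (alpha ` M) T"
  shows "\<exists>!j. j < r \<and> in_component Xi r (alpha ` M) j T"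
proof -
  obtain j where j: "j < r" and T_j: "T \<subseteq> alpha ` Ms j"
    using simple_direct_factor_subset_factor[OF T] by blast
  have T_normal: "T \<lhd> W\<lparr>carrier := alpha ` M\<rparr>" and T_simple: "simple_group (W\<lparr>carrier := T\<rparr>)"
    using T unfolding simple_direct_factor_def by auto
  have "carrier (W\<lparr>carrier := T\<rparr>) \<noteq> {\<one>\<^bsub>W\<lparr>carrier := T\<rparr>\<^esub>}" by (rule simple_group.simple_not_triv[OF T_simple])
  moreover have "\<one>\<^bsub>W\<^esub> \<in> T"
    using subgroup.one_closed[OF normal_imp_subgroup[OF T_normal]] by simp
  ultimately obtain t where t: "t \<in> T" "t \<noteq> \<one>\<^bsub>W\<^esub>" by auto
  have T_U: "T \<subseteq> alpha ` M \<inter> U_stab Xi r j"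
  proof
    fix x assume "x \<in> T"
    then obtain m where m: "m \<in> Ms j" "x = alpha m" using T_j by blast
    then have mM: "m \<in> M" using factor_subset[OF j] by blast
    then show "x \<in> alpha ` M \<inter> U_stab Xi r j"
      using alpha_carrier[OF subsetD[OF M_subset_G mM]] alpha_M_snd[OF mM] m(2) j
      unfolding U_stab_def by simp
  qed
  show ?thesis
  proof (rule ex1I[of _ j])
    obtain m where m: "m \<in> Ms j" "t = alpha m" using T_j t(1) by blast
    then have "proj_comp j t \<noteq> (\<lambda>\<xi>\<in>Xi. \<xi>)"
      using alpha_factor_eq_one[OF j m(1)] t(2) unfolding proj_comp_def by blast
    then show "j < r \<and> in_component Xi r (alpha ` M) j T"
      using j T_U t(1) unfolding in_component_def by blast
  next
    fix k assume k: "k < r \<and> in_component Xi r (alpha ` M) k T"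
    then obtain t' where t': "t' \<in> T" "proj_comp k t' \<noteq> (\<lambda>\<xi>\<in>Xi. \<xi>)"
      unfolding in_component_def by blast
    obtain m where m: "m \<in> Ms j" "t' = alpha m" using T_j t'(1) by blast
    show "k = j"
    proof (rule ccontr)
      assume "k \<noteq> j"
      then show False using alpha_factor_fst[OF j m(1)] k t'(2) m(2) unfolding proj_comp_def by simp
    qed
  qed
qed

lemma normal_inclusion_alpha: "normal_inclusion Xi r (alpha ` G) (alpha ` M)"
  unfolding normal_inclusion_def
proof (intro conjI ballI allI impI)
  show "subgroup (alpha ` G) W" using subgroup_alpha_image[OF subgroup_G subset_refl] .
  show "minimal_normal (W\<lparr>carrier := alpha ` G\<rparr>) (alpha ` M)"
    using group_hom.minimal_normal_image[OF group_hom_alpha[OF subgroup_G subset_refl]]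
      alpha_inj minimal_normal_M by simp
  show "nonabelian_set W (alpha ` M)"
    using group_hom.nonabelian_image[OF group_hom_alpha[OF subgroup_G subset_refl]] alpha_inj M_subset_G nonab
    unfolding nonabelian_set_def by simp
  fix x y assume x: "x \<in> prod_points Xi r" and y: "y \<in> prod_points Xi r"
  obtain p q where p: "p \<in> \<Omega>" "coords p = x" and q: "q \<in> \<Omega>" "coords q = y"
    using coords_surj[OF x] coords_surj[OF y] by blast
  obtain m where m: "m \<in> M" "m p = q" using M_transitive[OF p(1) q(1)] by blast
  then show "\<exists>n\<in>alpha ` M. prod_act Xi r n x = y"
    using prod_act_alpha[OF subsetD[OF M_subset_G m(1)] p(1)] p(2) q(2) by blast
qed (rule simple_direct_factor_component)

end

theorem theorem2p6:
  fixes \<Omega> :: "'a set" and G M :: "('a \<Rightarrow> 'a) set" and \<omega> :: 'a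
    and r :: nat and Ms :: "nat \<Rightarrow> ('a \<Rightarrow> 'a) set"
  assumes fin: "finite \<Omega>"
    and innate: "innately_transitive_plinth \<Omega> G M"
    and nonab: "nonabelian_set (BijGroup \<Omega>) M"
    and om: "\<omega> \<in> \<Omega>"
    and dec: "direct_decomp (BijGroup \<Omega>) M r Ms"
    and nontriv: "\<forall>i<r. Ms i \<noteq> {\<one>\<^bsub>BijGroup \<Omega>\<^esub>}"
    and distinct: "inj_on Ms {0..<r}"
    and inv: "invariant_decomp (BijGroup \<Omega>) G r Ms"
    and Xsub: "X_subgroup (BijGroup \<Omega>) r Ms (stabiliser M \<omega>)"
  defines "\<Xi> \<equiv> rcosets\<^bsub>sub_str (BijGroup \<Omega>) (Ms 0)\<^esub> (Ms 0 \<inter> stabiliser M \<omega>)"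
  shows "\<exists>\<alpha>. \<alpha> \<in> hom (sub_str (BijGroup \<Omega>) G) (wreath \<Xi> r) \<and> inj_on \<alpha> G \<and>
             normal_inclusion \<Xi> r (\<alpha> ` G) (\<alpha> ` M)"
proof -
  interpret plinth_decomposition \<Omega> G M \<omega> r Ms
    using innate nonab om dec nontriv distinct inv Xsub by unfold_locales
  have "Xi = \<Xi>" unfolding Xi_def \<Xi>_def ..
  then show ?thesis using alpha_hom[OF subset_refl] alpha_inj normal_inclusion_alpha by blast
qed

end
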